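(* In the standing setting, under Assumption 1, for every $y\in\operatorname{int}Q$, $$\|[\nabla^2f(y)]^{-1}\|_G:=\max_{h\in\mathbb H^*,\|h\|_G=1}\|[\nabla^2f(y)]^{-1}h\|_G\le\frac4{\gamma_d^2}[f^*-\langle b,y\rangle]^2,$$ and $\|v(y)\|_G\le\frac{2\nu^{1/2}}{\gamma_d}[f^*-\langle b,y\rangle]$.
   Context: Standing setting: $\mathbb E,\mathbb H$ finite-dimensional real spaces with duals, pairing $\langle\cdot,\cdot\rangle$; $K\subset\mathbb E$ a regular cone with dual cone $K^*$; $F$ a $\nu$-normal barrier for $K$ and $F_*(s)=\max_{x\in\operatorname{int}K}\{-\langle s,x\rangle-F(x)\}$ its dual barrier. $A:\mathbb E\to\mathbb H^*$ linear, $c\in\mathbb E^*$, $b\in\mathbb H^*$; primal $\min\{\langle c,x\rangle:Ax=b,x\in K\}$, dual $\max\{\langle b,y\rangle:s+A^*y=c,s\in K^*\}$, both strictly feasible; $f^*$ optimal dual value. Central path: $(x_\mu,s_\mu,y_\mu)$ with $Ax_\mu=b$, $s_\mu+A^*y_\mu=c$, $s_\mu=-\mu\nabla F(x_\mu)$. $s(y)=c-A^*y$, $Q=\{y:s(y)\in K^*\}$, $f(y)=F_*(s(y))$, $v(y)=[\nabla^2f(y)]^{-1}\nabla f(y)$. $B=\nabla^2F(x_1)$, $G=AB^{-1}A^*$, $\|y\|_G=\langle Gy,y\rangle^{1/2}$ ($y\in\mathbb H$), $\|g\|_G=\langle g,G^{-1}g\rangle^{1/2}$ ($g\in\mathbb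 H^*$). Assumption 1: there are an optimal dual pair $(s_*,y_* )$ and $\gamma_d>0$ with $f^*-\langle b,y\rangle\ge\gamma_d\|y-y_*\|_G$ for all $y\in Q$. *)

theory Defs
  imports "HOL-Analysis.Analysis"
begin

text \<open>Finite-dimensional real spaces E, H are modelled by euclidean_space types;
  their duals are identified with the spaces themselves via the inner product.\<close>

definition regular_cone :: "'a::euclidean_space set \<Rightarrow> bool" where
  "regular_cone K \<longleftrightarrow> closed K \<and> convex K \<and> cone K \<and> interior K \<noteq> {} \<and>
     (\<forall>x. x \<in> K \<and> - x \<in> K \<longrightarrow> x = 0)"

definition dual_cone :: "'a::euclidean_space set \<Rightarrow> 'a set" where
  "dual_cone K = {s. \<forall>x\<in>K. 0 \<le> s \<bullet> x}"

definition grad :: "('a::euclidean_space \<Rightarrow> real) \<Rightarrow> 'a \<Rightarrow> 'a" where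
  "grad f x = (THE g. (f has_derivative (\<lambda>u. g \<bullet> u)) (at x))"

definition hess :: "('a::euclidean_space \<Rightarrow> real) \<Rightarrow> 'a \<Rightarrow> 'a \<Rightarrow> 'a" where
  "hess f x = frechet_derivative (grad f) (at x)"

definition normal_barrier :: "real \<Rightarrow> 'a::euclidean_space set \<Rightarrow> ('a \<Rightarrow> real) \<Rightarrow> bool" where
  "normal_barrier \<nu> K F \<longleftrightarrow>
     (\<exists>F1 F2 (F3 :: 'a \<Rightarrow> 'a \<Rightarrow>\<^sub>L ('a \<Rightarrow>\<^sub>L 'a)).
        (\<forall>x\<in>interior K.
           (F has_derivative (\<lambda>u. F1 x \<bullet> u)) (at x) \<and>
           (F1 has_derivative blinfun_apply (F2 x)) (at x) \<and>
           (F2 has_derivative blinfun_apply (F3 x)) (at x)) \<and>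
        continuous_on (interior K) F3 \<and>
        (\<forall>x\<in>interior K. \<forall>u.
           \<bar>blinfun_apply (blinfun_apply (F3 x) u) u \<bullet> u\<bar>
              \<le> 2 * (blinfun_apply (F2 x) u \<bullet> u) powr (3/2) \<and>
           (F1 x \<bullet> u)\<^sup>2 \<le> \<nu> * (blinfun_apply (F2 x) u \<bullet> u))) \<and>
     convex_on (interior K) F \<and>
     (\<forall>x\<in>frontier K. filterlim F at_top (at x within interior K)) \<and>
     (\<forall>x\<in>interior K. \<forall>t>0. F (t *\<^sub>R x) = F x - \<nu> * ln t)"

definition dual_barrier :: "'a::euclidean_space set \<Rightarrow> ('a \<Rightarrow> real) \<Rightarrow> 'a \<Rightarrow> real" where
  "dual_barrier K F s = (SUP x\<in>interior K. - (s \<bullet> x) - F x)"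

definition Gmap :: "('e::euclidean_space \<Rightarrow> 'h::euclidean_space) \<Rightarrow> ('e \<Rightarrow> 'e) \<Rightarrow> 'h \<Rightarrow> 'h" where
  "Gmap A B = (\<lambda>y. A (inv B (adjoint A y)))"

definition G_norm_primal :: "('e::euclidean_space \<Rightarrow> 'h::euclidean_space) \<Rightarrow> ('e \<Rightarrow> 'e) \<Rightarrow> 'h \<Rightarrow> real" where
  "G_norm_primal A B y = sqrt (Gmap A B y \<bullet> y)"

definition G_norm_dual :: "('e::euclidean_space \<Rightarrow> 'h::euclidean_space) \<Rightarrow> ('e \<Rightarrow> 'e) \<Rightarrow> 'h \<Rightarrow> real" where
  "G_norm_dual A B g = sqrt (g \<bullet> inv (Gmap A B) g)"

definition G_opnorm :: "('e::euclidean_space \<Rightarrow> 'h::euclidean_space) \<Rightarrow> ('e \<Rightarrow> 'e) \<Rightarrow> ('h \<Rightarrow> 'h) \<Rightarrow> real" where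
  "G_opnorm A B T = Sup {G_norm_primal A B (T h) | h. G_norm_dual A B h = 1}"

end

theory Submission
  imports Defs
begin

text \<open>Write \<open>s(y) = c - A\<^sup>* y\<close> and let \<open>x(s) \<in> int K\<close> be the unique point with
  \<open>\<nabla>F(x) = -s\<close>. Then \<open>\<nabla>f(y) = A x(s(y))\<close> and \<open>\<nabla>\<^sup>2f(y) = A [\<nabla>\<^sup>2F(x)]\<^sup>-\<^sup>1 A\<^sup>*\<close>.
  Self-concordance puts the dual Dikin ellipsoid of \<open>x\<close> inside \<open>K\<^sup>*\<close>, so \<open>y \<plusminus> h \<in> Q\<close> whenever
  \<open>\<langle>\<nabla>\<^sup>2f(y) h, h\<rangle> \<le> 1\<close>; Assumption 1 at \<open>y \<plusminus> h\<close> and the triangle inequality give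
  \<open>\<parallel>h\<parallel>\<^sub>G \<le> r = (f\<^sup>* - \<langle>b,y\<rangle>) / \<gamma>\<^sub>d\<close>. Hence \<open>G \<le> r\<^sup>2 \<nabla>\<^sup>2f(y)\<close>, which bounds
  \<open>\<parallel>[\<nabla>\<^sup>2f(y)]\<^sup>-\<^sup>1\<parallel>\<^sub>G\<close> by \<open>r\<^sup>2\<close> and \<open>\<parallel>v(y)\<parallel>\<^sub>G\<close> by \<open>r \<langle>\<nabla>f(y), [\<nabla>\<^sup>2f(y)]\<^sup>-\<^sup>1 \<nabla>f(y)\<rangle>\<^sup>1\<^sup>/\<^sup>2\<close>.
  The last quantity is the local norm of the projection of \<open>x\<close> onto the range of
  \<open>[\<nabla>\<^sup>2F(x)]\<^sup>-\<^sup>1 A\<^sup>*\<close>, hence at most \<open>\<langle>\<nabla>\<^sup>2F(x) x, x\<rangle>\<^sup>1\<^sup>/\<^sup>2 = \<nu>\<^sup>1\<^sup>/\<^sup>2\<close> by logarithmic homogeneity.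
  The formula for \<open>\<nabla>\<^sup>2f\<close> comes from the inverse function theorem applied to \<open>\<nabla>F\<close>, whose
  derivative \<open>\<nabla>\<^sup>2F\<close> is symmetric and, by self-concordance and the barrier property, nondegenerate.\<close>

section \<open>Calculus and linear algebra\<close>

lemma has_derivative_along_line:
  fixes f :: "'a::real_normed_vector \<Rightarrow> 'b::real_normed_vector"
  assumes "(f has_derivative f') (at (x + t *\<^sub>R u))"
  shows "((\<lambda>t. f (x + t *\<^sub>R u)) has_derivative (\<lambda>h. f' (h *\<^sub>R u))) (at t)"
proof -
  have "((\<lambda>t. x + t *\<^sub>R u) has_derivative (\<lambda>h. h *\<^sub>R u)) (at t)"
    by (auto intro!: derivative_eq_intros)
  from has_derivative_compose[OF this assms] show ?thesis by (simp add: o_def)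
qed

lemma has_real_derivative_along_line:
  fixes f :: "'a::real_normed_vector \<Rightarrow> real"
  assumes "(f has_derivative f') (at (x + t *\<^sub>R u))"
  shows "((\<lambda>t. f (x + t *\<^sub>R u)) has_real_derivative f' u) (at t)"
proof -
  have "(\<lambda>h. f' (h *\<^sub>R u)) = (\<lambda>h. h * f' u)"
    using linear_cmul[OF has_derivative_linear[OF assms]] by (auto simp: mult.commute)
  with has_derivative_along_line[OF assms] show ?thesis
    by (simp add: has_field_derivative_def mult.commute[of _ "f' u"])
qed

lemma convex_line_preimage:
  assumes "convex S"
  shows "convex {t::real. x + t *\<^sub>R u \<in> S}"
  unfolding convex_def
proof (intro allI impI ballI, clarsimp)
  fix s t a b :: real
  assume st: "x + s *\<^sub>R u \<in> S" "x + t *\<^sub>R u \<in> S" "0 \<le> a" "0 \<le> b" "a + b = 1"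
  have "a *\<^sub>R (x + s *\<^sub>R u) + b *\<^sub>R (x + t *\<^sub>R u) \<in> S"
    using assms st unfolding convex_def by blast
  moreover have "a *\<^sub>R (x + s *\<^sub>R u) + b *\<^sub>R (x + t *\<^sub>R u) = x + (a * s + b * t) *\<^sub>R u"
    using st(5) by (simp add: algebra_simps flip: scaleR_add_left)
  ultimately show "x + (a * s + b * t) *\<^sub>R u \<in> S" by simp
qed

lemma powr_three_halves: "0 \<le> (x::real) \<Longrightarrow> x powr (3/2) = x * sqrt x"
proof (cases "x = 0")
  case False
  assume x: "0 \<le> x"
  have "x powr (3/2) = x powr (1 + 1/2)" by simp
  also have "\<dots> = x powr 1 * x powr (1/2)" by (rule powr_add)
  also have "\<dots> = x * sqrt x" using x False by (simp add: powr_half_sqrt)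
  finally show ?thesis .
qed simp

text \<open>The one-dimensional content of self-concordance: if \<open>\<bar>\<phi>'\<bar> \<le> 2 \<phi>\<^sup>3\<^sup>/\<^sup>2\<close>, then
  \<open>\<phi>\<^sup>-\<^sup>1\<^sup>/\<^sup>2\<close> is 1-Lipschitz; \<open>\<epsilon>\<close> regularises the points where \<open>\<phi>\<close> vanishes.\<close>
lemma self_concordant_inverse_sqrt_lipschitz:
  fixes \<phi> \<phi>' :: "real \<Rightarrow> real" and I :: "real set"
  assumes I: "convex I" and a: "a \<in> I" and b: "b \<in> I" and e: "\<epsilon> > 0"
    and D: "\<And>t. t \<in> I \<Longrightarrow> (\<phi> has_real_derivative \<phi>' t) (at t)"
    and nn: "\<And>t. t \<in> I \<Longrightarrow> \<phi> t \<ge> 0"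
    and sc: "\<And>t. t \<in> I \<Longrightarrow> \<bar>\<phi>' t\<bar> \<le> 2 * \<phi> t powr (3/2)"
  shows "\<bar>1 / sqrt (\<phi> b + \<epsilon>) - 1 / sqrt (\<phi> a + \<epsilon>)\<bar> \<le> \<bar>b - a\<bar>"
proof -
  define \<psi> where "\<psi> t = 1 / sqrt (\<phi> t + \<epsilon>)" for t
  define \<psi>' where "\<psi>' t = - \<phi>' t / (2 * (\<phi> t + \<epsilon>) * sqrt (\<phi> t + \<epsilon>))" for t
  have pos: "\<phi> t + \<epsilon> > 0" if "t \<in> I" for t using nn[OF that] e by simp
  have deriv: "(\<psi> has_real_derivative \<psi>' t) (at t)" if "t \<in> I" for t
  proof -
    have p: "\<phi> t + \<epsilon> > 0" using pos[OF that] .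
    have "((\<lambda>t. sqrt (\<phi> t + \<epsilon>)) has_real_derivative (inverse (sqrt (\<phi> t + \<epsilon>)) / 2 * \<phi>' t)) (at t)"
      using DERIV_chain2[OF DERIV_real_sqrt[OF p] DERIV_add[OF D[OF that] DERIV_const[of \<epsilon>]]] by simp
    from DERIV_inverse_fun[OF this] p
    have "((\<lambda>t. inverse (sqrt (\<phi> t + \<epsilon>))) has_real_derivative
        (- ((inverse (sqrt (\<phi> t + \<epsilon>)) / 2 * \<phi>' t) * inverse ((sqrt (\<phi> t + \<epsilon>))^Suc (Suc 0))))) (at t)"
      by simp
    moreover have "- ((inverse (sqrt (\<phi> t + \<epsilon>)) / 2 * \<phi>' t) * inverse ((sqrt (\<phi> t + \<epsilon>))^Suc (Suc 0))) = \<psi>' t"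
      using p unfolding \<psi>'_def by (simp add: field_simps)
    ultimately show ?thesis unfolding \<psi>_def by (simp add: inverse_eq_divide)
  qed
  have deriv_bound: "\<bar>\<psi>' t\<bar> \<le> 1" if "t \<in> I" for t
  proof -
    have "\<bar>\<phi>' t\<bar> \<le> 2 * (\<phi> t * sqrt (\<phi> t))" using sc[OF that] powr_three_halves[OF nn[OF that]] by simp
    also have "\<dots> \<le> 2 * ((\<phi> t + \<epsilon>) * sqrt (\<phi> t + \<epsilon>))"
      using nn[OF that] e by (intro mult_left_mono mult_mono) auto
    finally have "\<bar>\<phi>' t\<bar> \<le> 2 * (\<phi> t + \<epsilon>) * sqrt (\<phi> t + \<epsilon>)" by (simp only: mult.assoc)
    then show ?thesis unfolding \<psi>'_def using pos[OF that] by (simp add: abs_div divide_le_eq_1)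
  qed
  have "norm (\<psi> b - \<psi> a) \<le> 1 * norm (b - a)"
    by (rule field_differentiable_bound[OF I _ _ b a])
      (use deriv deriv_bound in \<open>auto intro: has_field_derivative_at_within\<close>)
  then show ?thesis unfolding \<psi>_def by simp
qed

lemma blinfun_inner_diff_le:
  assumes "norm (P - Q) \<le> e"
  shows "\<bar>blinfun_apply P a \<bullet> b - blinfun_apply Q a \<bullet> b\<bar> \<le> e * (norm a * norm b)"
proof -
  have "\<bar>blinfun_apply P a \<bullet> b - blinfun_apply Q a \<bullet> b\<bar> = \<bar>blinfun_apply (P - Q) a \<bullet> b\<bar>"
    by (simp add: blinfun.diff_left inner_diff_left)
  also have "\<dots> \<le> norm (blinfun_apply (P - Q) a) * norm b" by (rule Cauchy_Schwarz_ineq2)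
  also have "\<dots> \<le> (norm (P - Q) * norm a) * norm b" by (intro mult_right_mono norm_blinfun) auto
  also have "\<dots> \<le> (e * norm a) * norm b" by (intro mult_right_mono assms) auto
  finally show ?thesis by (simp add: mult.assoc)
qed

lemma grad_eqI:
  assumes "(f has_derivative (\<lambda>u. g \<bullet> u)) (at y)"
  shows "grad f y = g"
  unfolding grad_def
proof (rule the_equality[where P="\<lambda>g. (f has_derivative (\<lambda>u. g \<bullet> u)) (at y)", OF assms])
  fix g' assume "(f has_derivative (\<lambda>u. g' \<bullet> u)) (at y)"
  from has_derivative_unique[OF assms this] have "\<And>u. g \<bullet> u = g' \<bullet> u" by metis
  then have "(g - g') \<bullet> (g - g') = 0" by (simp add: inner_diff_left)
  then show "g' = g" by simp
qed

lemma hess_eqI: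
  assumes "(grad f has_derivative L) (at y)"
  shows "hess f y = L"
  unfolding hess_def using frechet_derivative_at[OF assms] by simp

definition symmetric_map :: "('b::real_inner \<Rightarrow> 'b) \<Rightarrow> bool" where
  "symmetric_map P \<longleftrightarrow> (\<forall>u v. P u \<bullet> v = P v \<bullet> u)"

definition pos_def_map :: "('b::real_inner \<Rightarrow> 'b) \<Rightarrow> bool" where
  "pos_def_map P \<longleftrightarrow> (\<forall>u. u \<noteq> 0 \<longrightarrow> P u \<bullet> u > 0)"

definition quad_norm :: "('b::real_inner \<Rightarrow> 'b) \<Rightarrow> 'b \<Rightarrow> real" where
  "quad_norm P v = sqrt (P v \<bullet> v)"

lemma pos_def_map_nonneg: "pos_def_map P \<Longrightarrow> P u \<bullet> u \<ge> 0"
  unfolding pos_def_map_def by (cases "u = 0") (auto simp: less_imp_le)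

lemma pos_def_map_bij:
  fixes P :: "'b::euclidean_space \<Rightarrow> 'b"
  assumes "linear P" "pos_def_map P"
  shows "bij P"
proof -
  have "inj P"
  proof (rule linear_injective_0[OF assms(1), THEN iffD2], intro allI impI)
    fix u assume "P u = 0"
    then show "u = 0" using assms(2) unfolding pos_def_map_def by force
  qed
  then show ?thesis using linear_injective_imp_surjective[OF assms(1)] by (simp add: bij_def)
qed

lemma pos_def_map_coercive:
  fixes P :: "'b::euclidean_space \<Rightarrow> 'b"
  assumes lin: "linear P" and pd: "pos_def_map P"
  shows "\<exists>m>0. \<forall>u. m * (norm u)\<^sup>2 \<le> P u \<bullet> u"
proof -
  have cont: "continuous_on (sphere 0 1) (\<lambda>u. P u \<bullet> u)"
    using linear_continuous_on[OF linear_conv_bounded_linear[THEN iffD1, OF lin]]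
    by (intro continuous_intros)
  obtain b :: 'b where "b \<in> Basis" using nonempty_Basis by blast
  then have ne: "sphere (0::'b) 1 \<noteq> {}" by (auto simp: sphere_def intro!: exI[of _ b])
  obtain u0 where u0: "u0 \<in> sphere 0 1" "\<And>v. v \<in> sphere 0 1 \<Longrightarrow> P u0 \<bullet> u0 \<le> P v \<bullet> v"
    using continuous_attains_inf[OF compact_sphere ne cont] by blast
  define m where "m = P u0 \<bullet> u0"
  have "u0 \<noteq> 0" using u0(1) by auto
  then have mpos: "m > 0" unfolding m_def using pd unfolding pos_def_map_def by blast
  have "m * (norm u)\<^sup>2 \<le> P u \<bullet> u" for u
  proof (cases "u = 0")
    case False
    let ?v = "(1 / norm u) *\<^sub>R u"
    have "m \<le> P ?v \<bullet> ?v" unfolding m_def using False by (intro u0(2)) simp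
    also have "\<dots> = (P u \<bullet> u) / (norm u)\<^sup>2"
      by (simp add: linear_cmul[OF lin] power2_eq_square)
    finally show ?thesis using False by (simp add: field_simps)
  qed (simp add: linear_0[OF lin])
  then show ?thesis using mpos by blast
qed

lemma pos_def_map_inv:
  fixes P :: "'b::euclidean_space \<Rightarrow> 'b"
  assumes lin: "linear P" and sym: "symmetric_map P" and pd: "pos_def_map P"
  shows "linear (inv P)" "\<And>v. P (inv P v) = v" "\<And>u. inv P (P u) = u"
    "symmetric_map (inv P)" "pos_def_map (inv P)"
proof -
  have bij: "bij P" by (rule pos_def_map_bij[OF lin pd])
  show PI: "\<And>v. P (inv P v) = v" using bij by (simp add: bij_is_surj surj_f_inv_f)
  show IP: "\<And>u. inv P (P u) = u" using bij by (simp add: bij_is_inj)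
  show "linear (inv P)" using linear_surjective_isomorphism[OF lin] bij
    by (metis IP PI bij_is_surj linear_inverse_left lin comp_apply fun_eq_iff id_apply
        linear_surjective_right_inverse)
  show "symmetric_map (inv P)" unfolding symmetric_map_def
  proof (intro allI)
    fix u v
    have "inv P u \<bullet> v = P (inv P v) \<bullet> inv P u" using PI by (simp add: inner_commute)
    also have "\<dots> = P (inv P u) \<bullet> inv P v" using sym unfolding symmetric_map_def by metis
    finally show "inv P u \<bullet> v = inv P v \<bullet> u" using PI by (simp add: inner_commute)
  qed
  show "pos_def_map (inv P)" unfolding pos_def_map_def
  proof (intro allI impI)
    fix u :: 'b assume "u \<noteq> 0"
    then have "inv P u \<noteq> 0" using PI lin linear_0 by metis
    moreover have "inv P u \<bullet> u = P (inv P u) \<bullet> inv P u" using PI by (simp add: inner_commute)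
    ultimately show "inv P u \<bullet> u > 0" using pd unfolding pos_def_map_def by simp
  qed
qed

lemma Gmap_inner_self: "linear A \<Longrightarrow> Gmap A P h \<bullet> h = inv P (adjoint A h) \<bullet> adjoint A h"
  unfolding Gmap_def by (simp add: adjoint_works)

lemma Gmap_pos_def:
  fixes A :: "'e::euclidean_space \<Rightarrow> 'h::euclidean_space" and P :: "'e \<Rightarrow> 'e"
  assumes A: "linear A" "surj A" and P: "linear P" "symmetric_map P" "pos_def_map P"
  shows "linear (Gmap A P)" "symmetric_map (Gmap A P)" "pos_def_map (Gmap A P)"
proof -
  note I = pos_def_map_inv[OF P]
  have lin_adj: "linear (adjoint A)" by (rule adjoint_linear[OF A(1)])
  show "linear (Gmap A P)" unfolding Gmap_def
    using linear_compose[OF linear_compose[OF lin_adj I(1)] A(1)] by (simp add: o_def)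
  show "symmetric_map (Gmap A P)" unfolding symmetric_map_def Gmap_def
  proof (intro allI)
    fix u v
    have "A (inv P (adjoint A u)) \<bullet> v = inv P (adjoint A u) \<bullet> adjoint A v"
      by (simp add: adjoint_works[OF A(1)])
    also have "\<dots> = inv P (adjoint A v) \<bullet> adjoint A u" using I(4) unfolding symmetric_map_def by metis
    also have "\<dots> = A (inv P (adjoint A v)) \<bullet> u" by (simp add: adjoint_works[OF A(1)])
    finally show "A (inv P (adjoint A u)) \<bullet> v = A (inv P (adjoint A v)) \<bullet> u" .
  qed
  show "pos_def_map (Gmap A P)" unfolding pos_def_map_def
  proof (intro allI impI)
    fix h :: 'h assume "h \<noteq> 0"
    moreover have "inj (adjoint A)" using A by simp
    ultimately have "adjoint A h \<noteq> 0" using lin_adj linear_injective_0 by blast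
    then show "Gmap A P h \<bullet> h > 0" using I(5) Gmap_inner_self[OF A(1)] unfolding pos_def_map_def by simp
  qed
qed

lemma psd_cauchy_schwarz:
  fixes P :: "'b::real_inner \<Rightarrow> 'b"
  assumes lin: "linear P" and sym: "symmetric_map P" and psd: "\<And>u. P u \<bullet> u \<ge> 0"
  shows "(P w \<bullet> z)\<^sup>2 \<le> (P w \<bullet> w) * (P z \<bullet> z)"
proof -
  have nn: "0 \<le> P w \<bullet> w + 2 * t * (P w \<bullet> z) + t\<^sup>2 * (P z \<bullet> z)" for t
  proof -
    have "P (w + t *\<^sub>R z) \<bullet> (w + t *\<^sub>R z) = P w \<bullet> w + 2 * t * (P w \<bullet> z) + t\<^sup>2 * (P z \<bullet> z)"
      using sym[unfolded symmetric_map_def, rule_format, of z w]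
      by (simp add: linear_add[OF lin] linear_cmul[OF lin] inner_add_left inner_add_right
          algebra_simps power2_eq_square)
    then show ?thesis using psd[of "w + t *\<^sub>R z"] by simp
  qed
  show ?thesis
  proof (cases "P z \<bullet> z = 0")
    case True
    have "P w \<bullet> z = 0"
    proof (rule ccontr)
      assume ne: "P w \<bullet> z \<noteq> 0"
      have "0 \<le> P w \<bullet> w + 2 * (- (P w \<bullet> w + 1) / (2 * (P w \<bullet> z))) * (P w \<bullet> z)"
        using nn[of "- (P w \<bullet> w + 1) / (2 * (P w \<bullet> z))"] True by simp
      also have "\<dots> = -1" using ne by (simp add: field_simps)
      finally show False by simp
    qed
    then show ?thesis using True by simp
  next
    case False
    then have pz: "P z \<bullet> z > 0" using psd[of z] by simp
    have "0 \<le> P w \<bullet> w + 2 * (- (P w \<bullet> z) / (P z \<bullet> z)) * (P w \<bullet> z) + (- (P w \<bullet> z) / (P z \<bullet> z))\<^sup>2 * (P z \<bullet> z)"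
      by (rule nn)
    also have "\<dots> = P w \<bullet> w - (P w \<bullet> z)\<^sup>2 / (P z \<bullet> z)" using pz
      by (simp add: field_simps power2_eq_square)
    finally show ?thesis using pz by (simp add: field_simps)
  qed
qed

lemma quad_norm_nonneg: "pos_def_map P \<Longrightarrow> quad_norm P v \<ge> 0"
  unfolding quad_norm_def using pos_def_map_nonneg[of P v] by simp

lemma quad_norm_sq: "pos_def_map P \<Longrightarrow> (quad_norm P v)\<^sup>2 = P v \<bullet> v"
  unfolding quad_norm_def using pos_def_map_nonneg[of P v] by simp

lemma quad_norm_scaleR:
  assumes "linear P"
  shows "quad_norm P (c *\<^sub>R v) = \<bar>c\<bar> * quad_norm P v"
proof -
  have "P (c *\<^sub>R v) \<bullet> (c *\<^sub>R v) = c\<^sup>2 * (P v \<bullet> v)"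
    by (simp add: linear_cmul[OF assms] power2_eq_square)
  then show ?thesis unfolding quad_norm_def by (simp add: real_sqrt_mult)
qed

lemma quad_norm_cauchy_schwarz:
  assumes "linear P" "symmetric_map P" "pos_def_map P"
  shows "\<bar>P w \<bullet> z\<bar> \<le> quad_norm P w * quad_norm P z"
proof -
  have "sqrt ((P w \<bullet> z)\<^sup>2) \<le> sqrt ((P w \<bullet> w) * (P z \<bullet> z))"
    by (rule real_sqrt_le_mono[OF psd_cauchy_schwarz[OF assms(1,2) pos_def_map_nonneg[OF assms(3)]]])
  then show ?thesis unfolding quad_norm_def by (simp add: real_sqrt_mult)
qed

lemma quad_norm_triangle:
  assumes P: "linear P" "symmetric_map P" "pos_def_map P"
  shows "quad_norm P (a + b) \<le> quad_norm P a + quad_norm P b"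
proof -
  have "(quad_norm P (a + b))\<^sup>2 = (quad_norm P a)\<^sup>2 + 2 * (P a \<bullet> b) + (quad_norm P b)\<^sup>2"
    using P(2) unfolding quad_norm_sq[OF P(3)] symmetric_map_def
    by (simp add: linear_add[OF P(1)] inner_add_left inner_add_right)
  also have "\<dots> \<le> (quad_norm P a + quad_norm P b)\<^sup>2"
    using quad_norm_cauchy_schwarz[OF P, of a b] by (simp add: power2_eq_square algebra_simps abs_le_iff)
  finally show ?thesis
    using quad_norm_nonneg[OF P(3)] by (meson add_nonneg_nonneg power2_le_imp_le)
qed

lemma quad_norm_unit_exists:
  fixes P :: "'b::euclidean_space \<Rightarrow> 'b"
  assumes "linear P" "pos_def_map P"
  shows "\<exists>g. quad_norm P g = 1"
proof -
  obtain e :: 'b where "e \<in> Basis" using nonempty_Basis by blast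
  then have "e \<noteq> 0" by auto
  then have q: "P e \<bullet> e > 0" using assms(2) unfolding pos_def_map_def by blast
  then have "quad_norm P e > 0" unfolding quad_norm_def by simp
  then have "quad_norm P ((1 / quad_norm P e) *\<^sub>R e) = 1" by (simp add: quad_norm_scaleR[OF assms(1)])
  then show ?thesis by blast
qed

lemma quad_form_le_of_ellipsoid:
  assumes G: "linear G" "pos_def_map G" and M: "linear M" "pos_def_map M"
    and ellipsoid: "\<And>h. M h \<bullet> h \<le> 1 \<Longrightarrow> quad_norm G h \<le> R"
  shows "G h \<bullet> h \<le> R\<^sup>2 * (M h \<bullet> h)"
proof (cases "h = 0")
  case True
  then show ?thesis using linear_0[OF G(1)] linear_0[OF M(1)] by simp
next
  case False
  define m where "m = M h \<bullet> h"
  have m: "m > 0" using M(2) False unfolding pos_def_map_def m_def by blast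
  define h' where "h' = (1 / sqrt m) *\<^sub>R h"
  have "M h' \<bullet> h' = (1 / sqrt m)\<^sup>2 * m" unfolding h'_def m_def
    by (simp add: linear_cmul[OF M(1)] power2_eq_square)
  also have "\<dots> = 1" using m by (simp add: power_divide)
  finally have "quad_norm G h' \<le> R" by (rule ellipsoid[OF eq_refl])
  moreover have "quad_norm G h' = quad_norm G h / sqrt m"
    unfolding h'_def quad_norm_scaleR[OF G(1)] using m by simp
  ultimately have "quad_norm G h / sqrt m \<le> R" by simp
  then have "quad_norm G h \<le> R * sqrt m" using m by (simp add: divide_le_eq)
  then have "(quad_norm G h)\<^sup>2 \<le> (R * sqrt m)\<^sup>2" using quad_norm_nonneg[OF G(2)]
    by (simp add: power_mono)
  then show ?thesis using quad_norm_sq[OF G(2), of h] m unfolding m_def by (simp add: power_mult_distrib)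
qed

lemma quad_norm_inv_le:
  fixes G M :: "'b::euclidean_space \<Rightarrow> 'b"
  assumes G: "linear G" "symmetric_map G" "pos_def_map G"
    and M: "linear M" "symmetric_map M" "pos_def_map M" and R: "R \<ge> 0"
    and loewner: "\<And>h. G h \<bullet> h \<le> R\<^sup>2 * (M h \<bullet> h)"
  shows "quad_norm G (inv M g) \<le> R * sqrt (g \<bullet> inv M g)"
    and "quad_norm (inv G) g = 1 \<Longrightarrow> quad_norm G (inv M g) \<le> R\<^sup>2"
proof -
  note IM = pos_def_map_inv[OF M]
  note IG = pos_def_map_inv[OF G]
  have g_nonneg: "g \<bullet> inv M g \<ge> 0"
    using pos_def_map_nonneg[OF IM(5), of g] inner_commute[of g "inv M g"] by linarith
  have sq: "(quad_norm G (inv M g))\<^sup>2 \<le> R\<^sup>2 * (g \<bullet> inv M g)"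
  proof -
    have "(quad_norm G (inv M g))\<^sup>2 = G (inv M g) \<bullet> inv M g" by (rule quad_norm_sq[OF G(3)])
    also have "\<dots> \<le> R\<^sup>2 * (M (inv M g) \<bullet> inv M g)" by (rule loewner)
    also have "M (inv M g) \<bullet> inv M g = g \<bullet> inv M g" using IM(2) by simp
    finally show ?thesis .
  qed
  have "(R * sqrt (g \<bullet> inv M g))\<^sup>2 = R\<^sup>2 * (g \<bullet> inv M g)"
    using g_nonneg by (simp add: power_mult_distrib)
  then show "quad_norm G (inv M g) \<le> R * sqrt (g \<bullet> inv M g)"
    using sq R g_nonneg by (auto intro: power2_le_imp_le)
  assume g1: "quad_norm (inv G) g = 1"
  define w where "w = inv M g"
  define v where "v = inv G g"
  have "G v \<bullet> v = g \<bullet> v" unfolding v_def using IG(2) by simp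
  then have "quad_norm G v = 1" using g1 unfolding quad_norm_def v_def by (simp add: inner_commute)
  moreover have "g \<bullet> w = G v \<bullet> w" unfolding v_def using IG(2) by simp
  ultimately have gw: "g \<bullet> w \<le> quad_norm G w" using quad_norm_cauchy_schwarz[OF G, of v w] by simp
  have "(quad_norm G w)\<^sup>2 \<le> R\<^sup>2 * (g \<bullet> w)" using sq unfolding w_def .
  also have "\<dots> \<le> R\<^sup>2 * quad_norm G w" using gw by (simp add: mult_left_mono)
  finally have sq': "(quad_norm G w)\<^sup>2 \<le> R\<^sup>2 * quad_norm G w" .
  show "quad_norm G (inv M g) \<le> R\<^sup>2"
  proof (cases "quad_norm G w = 0")
    case False
    then have "quad_norm G w > 0" using quad_norm_nonneg[OF G(3), of w] by simp
    then show ?thesis using sq' unfolding w_def by (simp add: power2_eq_square)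
  qed (use R w_def in simp)
qed

section \<open>Normal barriers\<close>

lemma convex_dual_cone: "convex (dual_cone K)"
  unfolding convex_def dual_cone_def
  by (auto simp: inner_add_left intro!: add_nonneg_nonneg mult_nonneg_nonneg)

lemma dual_cone_ball_margin:
  assumes "\<delta> > 0" "ball s \<delta> \<subseteq> dual_cone K" and x: "x \<in> K"
  shows "\<delta> / 2 * norm x \<le> s \<bullet> x"
proof (cases "x = 0")
  case False
  let ?v = "s - (\<delta> / (2 * norm x)) *\<^sub>R x"
  have "?v \<in> ball s \<delta>" using False assms(1) by (simp add: dist_norm)
  then have "0 \<le> ?v \<bullet> x" using assms(2) x unfolding dual_cone_def by blast
  also have "?v \<bullet> x = s \<bullet> x - \<delta> / 2 * norm x"
    using False by (simp add: inner_diff_left power2_norm_eq_inner[symmetric] power2_eq_square)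
  finally show ?thesis by simp
qed simp

locale barrier_derivatives =
  fixes K :: "'a::euclidean_space set" and F :: "'a \<Rightarrow> real" and \<nu> :: real
    and F1 :: "'a \<Rightarrow> 'a" and F2 :: "'a \<Rightarrow> 'a \<Rightarrow>\<^sub>L 'a" and F3 :: "'a \<Rightarrow> 'a \<Rightarrow>\<^sub>L ('a \<Rightarrow>\<^sub>L 'a)"
  assumes K: "regular_cone K"
  and F_deriv: "\<And>x. x \<in> interior K \<Longrightarrow> (F has_derivative (\<lambda>u. F1 x \<bullet> u)) (at x)"
  and grad_deriv: "\<And>x. x \<in> interior K \<Longrightarrow> (F1 has_derivative blinfun_apply (F2 x)) (at x)"
  and hess_deriv: "\<And>x. x \<in> interior K \<Longrightarrow> (F2 has_derivative blinfun_apply (F3 x)) (at x)"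
  and self_concordant: "\<And>x u. x \<in> interior K \<Longrightarrow>
           \<bar>blinfun_apply (blinfun_apply (F3 x) u) u \<bullet> u\<bar>
              \<le> 2 * (blinfun_apply (F2 x) u \<bullet> u) powr (3/2)"
  and barrier_param: "\<And>x u. x \<in> interior K \<Longrightarrow> (F1 x \<bullet> u)\<^sup>2 \<le> \<nu> * (blinfun_apply (F2 x) u \<bullet> u)"
  and F_convex: "convex_on (interior K) F"
  and F_blows_up: "\<And>x. x \<in> frontier K \<Longrightarrow> filterlim F at_top (at x within interior K)"
  and log_homogeneous: "\<And>x t. x \<in> interior K \<Longrightarrow> t > 0 \<Longrightarrow> F (t *\<^sub>R x) = F x - \<nu> * ln t"
begin

abbreviation "U \<equiv> interior K"

abbreviation "H x u \<equiv> blinfun_apply (F2 x) u"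

lemma K_closed: "closed K" and K_convex: "convex K" and K_cone: "cone K"
  and U_nonempty: "U \<noteq> {}" and K_pointed: "\<And>x. x \<in> K \<Longrightarrow> - x \<in> K \<Longrightarrow> x = 0"
  using K unfolding regular_cone_def by auto

lemma U_convex: "convex U" by (simp add: K_convex convex_interior)

lemma U_subset_K: "x \<in> U \<Longrightarrow> x \<in> K" using interior_subset by blast

lemma K_scaleR: "x \<in> K \<Longrightarrow> c \<ge> 0 \<Longrightarrow> c *\<^sub>R x \<in> K"
  using K_cone unfolding cone_def by blast

lemma K_add:
  assumes "a \<in> K" "b \<in> K"
  shows "a + b \<in> K"
proof -
  have "(1/2) *\<^sub>R a + (1/2) *\<^sub>R b \<in> K"
    using K_convex assms unfolding convex_def by auto
  from K_scaleR[OF this, of 2] show ?thesis by (simp add: scaleR_right_distrib)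
qed

lemma U_scaleR:
  assumes "x \<in> U" "t > 0"
  shows "t *\<^sub>R x \<in> U"
proof -
  obtain e where e: "e > 0" "ball x e \<subseteq> K" using assms(1) mem_interior by blast
  have "ball (t *\<^sub>R x) (t * e) \<subseteq> K"
  proof
    fix y assume y: "y \<in> ball (t *\<^sub>R x) (t * e)"
    have "dist x ((1/t) *\<^sub>R y) = (1/t) * dist (t *\<^sub>R x) y"
    proof -
      have "x - (1/t) *\<^sub>R y = (1/t) *\<^sub>R (t *\<^sub>R x - y)" using assms(2) by (simp add: algebra_simps)
      then show ?thesis using assms(2) by (simp add: dist_norm)
    qed
    also have "\<dots> < (1/t) * (t * e)" using y assms(2)
      by (simp add: dist_commute divide_simps mult.commute)
    finally have "(1/t) *\<^sub>R y \<in> K" using e assms(2) by auto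
    from K_scaleR[OF this, of t] assms(2) show "y \<in> K" by simp
  qed
  then show ?thesis using e assms(2) mem_interior by (metis mult_pos_pos)
qed

lemma U_add_K:
  assumes "x \<in> U" "z \<in> K"
  shows "x + z \<in> U"
proof -
  obtain e where e: "e > 0" "ball x e \<subseteq> K" using assms(1) mem_interior by blast
  have "ball (x + z) e \<subseteq> K"
  proof
    fix y assume "y \<in> ball (x + z) e"
    then have "y - z \<in> ball x e" by (simp add: dist_norm algebra_simps)
    then have "y - z \<in> K" using e by auto
    from K_add[OF this assms(2)] show "y \<in> K" by simp
  qed
  then show ?thesis using e mem_interior by blast
qed

lemma zero_notin_U: "0 \<notin> U"
proof
  assume "0 \<in> U"
  then obtain e where e: "e > 0" "ball 0 e \<subseteq> K" using mem_interior by blast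
  obtain b :: 'a where b: "b \<in> Basis" using nonempty_Basis by blast
  have nb: "norm b = 1" using b by simp
  let ?v = "(e/2) *\<^sub>R b"
  have "?v \<in> K" "- ?v \<in> K" using e nb by (auto simp: dist_norm)
  with K_pointed have "?v = 0" by blast
  then show False using e b by auto
qed

lemma zero_in_K: "0 \<in> K"
proof -
  obtain x where "x \<in> U" using U_nonempty by blast
  from K_scaleR[OF U_subset_K[OF this], of 0] show ?thesis by simp
qed

lemma zero_in_frontier: "0 \<in> frontier K"
  using zero_notin_U zero_in_K K_closed by (simp add: frontier_def)

lemma bounded_approach_to_frontier:
  assumes p: "p \<in> frontier K" and lim: "filterlim \<gamma> (at p within U) Fl" and nb: "Fl \<noteq> bot"
    and ev: "eventually (\<lambda>t. F (\<gamma> t) \<le> M) Fl"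
  shows False
proof -
  have "filterlim (\<lambda>t. F (\<gamma> t)) at_top Fl"
    using filterlim_compose[OF F_blows_up[OF p] lim] .
  then have "eventually (\<lambda>t. F (\<gamma> t) > M) Fl" by (simp add: filterlim_at_top_dense)
  with ev have "eventually (\<lambda>t. False) Fl" by eventually_elim auto
  with nb show False by simp
qed

text \<open>For \<open>\<nu> \<le> 0\<close>, homogeneity keeps \<open>F(t x\<^sub>0)\<close> bounded as \<open>t \<rightarrow> 0\<^sup>+\<close>, although \<open>0 \<in> \<partial>K\<close>.\<close>
lemma nu_pos: "\<nu> > 0"
proof (rule ccontr)
  assume "\<not> \<nu> > 0"
  then have nu: "\<nu> \<le> 0" by simp
  obtain x0 where x0: "x0 \<in> U" using U_nonempty by blast
  have x0nz: "x0 \<noteq> 0" using x0 zero_notin_U by auto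
  show False
  proof (rule bounded_approach_to_frontier[OF zero_in_frontier, of "\<lambda>t. t *\<^sub>R x0" "at_right 0" "F x0"])
    show "filterlim (\<lambda>t. t *\<^sub>R x0) (at 0 within U) (at_right 0)"
      unfolding filterlim_at
    proof
      show "\<forall>\<^sub>F t in at_right 0. t *\<^sub>R x0 \<in> U \<and> t *\<^sub>R x0 \<noteq> 0"
        using eventually_at_right_less[of 0] by eventually_elim (use x0 x0nz U_scaleR in auto)
      have "((\<lambda>t. t *\<^sub>R x0) \<longlongrightarrow> 0 *\<^sub>R x0) (at_right 0)"
        by (intro tendsto_intros)
      then show "((\<lambda>t. t *\<^sub>R x0) \<longlongrightarrow> 0) (at_right 0)" by simp
    qed
    show "at_right (0::real) \<noteq> bot" by simp
    have "eventually (\<lambda>t. 0 < t \<and> t < 1) (at_right (0::real))"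
      by (simp add: eventually_at_right_less eventually_conj eventually_at_right_field)
        (meson less_numeral_extra(1))
    then show "\<forall>\<^sub>F t in at_right 0. F (t *\<^sub>R x0) \<le> F x0"
    proof eventually_elim
      case (elim t)
      then have "ln t < 0" by simp
      then have "\<nu> * ln t \<ge> 0" using nu by (simp add: mult_nonpos_nonpos)
      then show ?case using log_homogeneous[OF x0, of t] elim by simp
    qed
  qed
qed

lemma hess_nonneg:
  assumes x: "x \<in> U"
  shows "H x u \<bullet> u \<ge> 0"
proof -
  have "0 \<le> (F1 x \<bullet> u)\<^sup>2" by simp
  also have "\<dots> \<le> \<nu> * (H x u \<bullet> u)" using barrier_param[OF x] .
  finally show ?thesis using nu_pos by (simp add: zero_le_mult_iff)
qed

lemma hess_along_line_has_derivative:
  assumes "x + t *\<^sub>R u \<in> U"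
  shows "((\<lambda>t. H (x + t *\<^sub>R u) v \<bullet> w) has_real_derivative
           (blinfun_apply (blinfun_apply (F3 (x + t *\<^sub>R u)) u) v \<bullet> w)) (at t)"
proof -
  have "((\<lambda>z. H z v \<bullet> w) has_derivative
      (\<lambda>d. blinfun_apply (blinfun_apply (F3 (x + t *\<^sub>R u)) d) v \<bullet> w)) (at (x + t *\<^sub>R u))"
    using hess_deriv[OF assms] by (auto intro!: derivative_eq_intros)
  from has_real_derivative_along_line[OF this] show ?thesis .
qed

lemma grad_along_line_has_derivative:
  assumes "x + t *\<^sub>R u \<in> U"
  shows "((\<lambda>t. F1 (x + t *\<^sub>R u) \<bullet> w) has_real_derivative (H (x + t *\<^sub>R u) u \<bullet> w)) (at t)"
  by (rule has_real_derivative_along_line[of "\<lambda>z. F1 z \<bullet> w" "\<lambda>d. H (x + t *\<^sub>R u) d \<bullet> w", simplified])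
     (rule has_derivative_inner_left[OF grad_deriv[OF assms]])

lemma F_along_line_has_derivative:
  assumes "x + t *\<^sub>R u \<in> U"
  shows "((\<lambda>t. F (x + t *\<^sub>R u)) has_real_derivative (F1 (x + t *\<^sub>R u) \<bullet> u)) (at t)"
  by (rule has_real_derivative_along_line[of F "\<lambda>d. F1 (x + t *\<^sub>R u) \<bullet> d", simplified])
    (rule F_deriv[OF assms])

lemma hess_inverse_sqrt_lipschitz:
  assumes "x + a *\<^sub>R u \<in> U" "x + b *\<^sub>R u \<in> U" "\<epsilon> > 0"
  shows "\<bar>1 / sqrt (H (x + b *\<^sub>R u) u \<bullet> u + \<epsilon>) - 1 / sqrt (H (x + a *\<^sub>R u) u \<bullet> u + \<epsilon>)\<bar> \<le> \<bar>b - a\<bar>"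
  by (rule self_concordant_inverse_sqrt_lipschitz[where I="{t. x + t *\<^sub>R u \<in> U}"
        and \<phi>="\<lambda>t. H (x + t *\<^sub>R u) u \<bullet> u"
        and \<phi>'="\<lambda>t. blinfun_apply (blinfun_apply (F3 (x + t *\<^sub>R u)) u) u \<bullet> u"])
    (use assms hess_along_line_has_derivative hess_nonneg self_concordant
      convex_line_preimage[OF U_convex] in auto)

lemma grad_inner_self:
  assumes x: "x \<in> U"
  shows "F1 x \<bullet> x = - \<nu>"
proof -
  have "(F has_derivative (\<lambda>u. F1 x \<bullet> u)) (at (0 + 1 *\<^sub>R x))" using F_deriv[OF x] by simp
  from has_real_derivative_along_line[OF this]
  have D1: "((\<lambda>t. F (t *\<^sub>R x)) has_real_derivative F1 x \<bullet> x) (at 1)" by simp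
  have D2: "((\<lambda>t. F x - \<nu> * ln t) has_real_derivative (0 - \<nu> * (1/1))) (at (1::real))"
    by (auto intro!: derivative_eq_intros)
  have "((\<lambda>t. F (t *\<^sub>R x)) has_real_derivative (0 - \<nu> * (1/1))) (at (1::real))"
    by (rule has_field_derivative_transform_within_open[OF D2, of "{0<..}"])
      (use log_homogeneous[OF x] in auto)
  from DERIV_unique[OF D1 this] show ?thesis by simp
qed

lemma grad_homogeneous:
  assumes x: "x \<in> U" and t: "t > 0"
  shows "t *\<^sub>R F1 (t *\<^sub>R x) = F1 x"
proof -
  have tx: "t *\<^sub>R x \<in> U" using U_scaleR[OF x t] .
  have "((\<lambda>z. t *\<^sub>R z) has_derivative (\<lambda>h. t *\<^sub>R h)) (at x)" by (auto intro!: derivative_eq_intros)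
  from has_derivative_compose[OF this F_deriv[OF tx]]
  have A: "((\<lambda>z. F (t *\<^sub>R z)) has_derivative (\<lambda>h. F1 (t *\<^sub>R x) \<bullet> (t *\<^sub>R h))) (at x)" by (simp add: o_def)
  have "((\<lambda>z. F z - \<nu> * ln t) has_derivative (\<lambda>h. F1 x \<bullet> h - 0)) (at x)"
    by (rule has_derivative_diff[OF F_deriv[OF x] has_derivative_const])
  then have "((\<lambda>z. F (t *\<^sub>R z)) has_derivative (\<lambda>h. F1 x \<bullet> h - 0)) (at x)"
    by (rule has_derivative_transform_within_open[OF _ open_interior x]) (use log_homogeneous t in auto)
  from has_derivative_unique[OF A this]
  have "\<And>h. F1 (t *\<^sub>R x) \<bullet> (t *\<^sub>R h) = F1 x \<bullet> h" by (metis diff_zero)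
  then have "\<And>h. (t *\<^sub>R F1 (t *\<^sub>R x) - F1 x) \<bullet> h = 0" by (simp add: inner_diff_left)
  from this[of "t *\<^sub>R F1 (t *\<^sub>R x) - F1 x"] show ?thesis by simp
qed

lemma hess_apply_self:
  assumes x: "x \<in> U"
  shows "H x x = - F1 x"
proof -
  have "(F1 has_derivative blinfun_apply (F2 x)) (at (0 + 1 *\<^sub>R x))" using grad_deriv[OF x] by simp
  from has_derivative_along_line[OF this]
  have A0: "((\<lambda>t. F1 (t *\<^sub>R x)) has_derivative (\<lambda>h. H x (h *\<^sub>R x))) (at 1)" by simp
  have A: "((\<lambda>t. t *\<^sub>R F1 (t *\<^sub>R x)) has_derivative (\<lambda>h. 1 *\<^sub>R H x (h *\<^sub>R x) + h *\<^sub>R F1 (1 *\<^sub>R x))) (at 1)"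
    using has_derivative_scaleR[OF has_derivative_ident A0] by simp
  have "((\<lambda>t. F1 x) has_derivative (\<lambda>h. 0)) (at (1::real))" by simp
  then have B: "((\<lambda>t. t *\<^sub>R F1 (t *\<^sub>R x)) has_derivative (\<lambda>h. 0)) (at (1::real))"
    by (rule has_derivative_transform_within_open[where s="{0<..}"]) (auto simp: grad_homogeneous[OF x])
  from fun_cong[OF has_derivative_unique[OF A B], of 1] have "H x x + F1 x = 0" by simp
  then show ?thesis by (simp add: eq_neg_iff_add_eq_0)
qed

lemma second_difference_mean_value:
  assumes h: "h > 0" and inU: "\<And>a b. 0 \<le> a \<Longrightarrow> a \<le> h \<Longrightarrow> 0 \<le> b \<Longrightarrow> b \<le> h \<Longrightarrow> x + a *\<^sub>R u + b *\<^sub>R v \<in> U"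
  shows "\<exists>\<xi> \<eta>. 0 < \<xi> \<and> \<xi> < h \<and> 0 < \<eta> \<and> \<eta> < h \<and>
     F (x + h *\<^sub>R u + h *\<^sub>R v) - F (x + h *\<^sub>R u) - F (x + h *\<^sub>R v) + F x = h\<^sup>2 * (H (x + \<xi> *\<^sub>R u + \<eta> *\<^sub>R v) v \<bullet> u)"
proof -
  have eq1: "\<And>a. x + h *\<^sub>R v + a *\<^sub>R u = x + a *\<^sub>R u + h *\<^sub>R v" by (simp add: algebra_simps)
  have k: "((\<lambda>a. F (x + h *\<^sub>R v + a *\<^sub>R u) - F (x + a *\<^sub>R u)) has_real_derivative
      (F1 (x + h *\<^sub>R v + a *\<^sub>R u) \<bullet> u - F1 (x + a *\<^sub>R u) \<bullet> u)) (at a)" if "0 \<le> a" "a \<le> h" for a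
  proof -
    have m1: "x + h *\<^sub>R v + a *\<^sub>R u \<in> U" unfolding eq1 using inU[OF that, of h] h by simp
    have m2: "x + a *\<^sub>R u \<in> U" using inU[OF that, of 0] h by simp
    show ?thesis
      by (intro DERIV_diff has_real_derivative_along_line[of F "\<lambda>w. F1 (x + h *\<^sub>R v + a *\<^sub>R u) \<bullet> w", simplified]
          has_real_derivative_along_line[of F "\<lambda>w. F1 (x + a *\<^sub>R u) \<bullet> w", simplified] F_deriv m1 m2)
  qed
  from MVT2[OF h k] obtain \<xi> where xi: "0 < \<xi>" "\<xi> < h"
    "(F (x + h *\<^sub>R v + h *\<^sub>R u) - F (x + h *\<^sub>R u)) - (F (x + h *\<^sub>R v + 0 *\<^sub>R u) - F (x + 0 *\<^sub>R u))
      = (h - 0) * (F1 (x + h *\<^sub>R v + \<xi> *\<^sub>R u) \<bullet> u - F1 (x + \<xi> *\<^sub>R u) \<bullet> u)" by blast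
  have m: "((\<lambda>b. F1 (x + \<xi> *\<^sub>R u + b *\<^sub>R v) \<bullet> u) has_real_derivative (H (x + \<xi> *\<^sub>R u + b *\<^sub>R v) v \<bullet> u)) (at b)"
    if "0 \<le> b" "b \<le> h" for b
  proof -
    have m1: "x + \<xi> *\<^sub>R u + b *\<^sub>R v \<in> U" using inU[of \<xi> b] xi that by simp
    show ?thesis
      by (rule has_real_derivative_along_line[of "\<lambda>z. F1 z \<bullet> u" "\<lambda>w. H (x + \<xi> *\<^sub>R u + b *\<^sub>R v) w \<bullet> u", simplified])
         (rule has_derivative_inner_left[OF grad_deriv[OF m1]])
  qed
  from MVT2[OF h m] obtain \<eta> where eta: "0 < \<eta>" "\<eta> < h"
    "F1 (x + \<xi> *\<^sub>R u + h *\<^sub>R v) \<bullet> u - F1 (x + \<xi> *\<^sub>R u + 0 *\<^sub>R v) \<bullet> u = (h - 0) * (H (x + \<xi> *\<^sub>R u + \<eta> *\<^sub>R v) v \<bullet> u)"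
    by blast
  have "F (x + h *\<^sub>R u + h *\<^sub>R v) - F (x + h *\<^sub>R u) - F (x + h *\<^sub>R v) + F x
     = h * (F1 (x + \<xi> *\<^sub>R u + h *\<^sub>R v) \<bullet> u - F1 (x + \<xi> *\<^sub>R u) \<bullet> u)"
    using xi(3) eq1[of h] eq1[of \<xi>] by (simp add: algebra_simps)
  also have "\<dots> = h\<^sup>2 * (H (x + \<xi> *\<^sub>R u + \<eta> *\<^sub>R v) v \<bullet> u)"
    using eta(3) by (simp add: power2_eq_square)
  finally show ?thesis using xi eta by blast
qed

lemma second_difference_near_hess:
  assumes x: "x \<in> U" and e: "e > 0"
  shows "\<forall>\<^sub>F h in at_right 0.
    \<bar>(F (x + h *\<^sub>R u + h *\<^sub>R v) - F (x + h *\<^sub>R u) - F (x + h *\<^sub>R v) + F x) / h\<^sup>2 - H x v \<bullet> u\<bar>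
      \<le> e * (norm v * norm u)"
proof -
  obtain r where r: "r > 0" "ball x r \<subseteq> U" using x open_interior open_contains_ball by blast
  have "continuous (at x) F2" using has_derivative_continuous[OF hess_deriv[OF x]] .
  then obtain \<delta> where \<delta>: "\<delta> > 0" "\<And>w. dist w x < \<delta> \<Longrightarrow> dist (F2 w) (F2 x) < e"
    using e unfolding continuous_at_eps_delta by blast
  define N where "N = norm u + norm v + 1"
  have N: "N > 0" unfolding N_def by (simp add: add_nonneg_pos)
  have near: "dist (x + a *\<^sub>R u + b *\<^sub>R v) x < min r \<delta>"
    if "0 \<le> a" "a \<le> h" "0 \<le> b" "b \<le> h" "h < min r \<delta> / N" for a b h
  proof -
    have "dist (x + a *\<^sub>R u + b *\<^sub>R v) x \<le> a * norm u + b * norm v"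
      using norm_triangle_ineq[of "a *\<^sub>R u" "b *\<^sub>R v"] that by (simp add: dist_norm add.assoc)
    also have "\<dots> \<le> h * norm u + h * norm v" by (intro add_mono mult_right_mono) (use that in auto)
    also have "\<dots> \<le> h * N" unfolding N_def using that by (simp add: distrib_left)
    also have "\<dots> < min r \<delta>" using that N by (simp add: pos_less_divide_eq)
    finally show ?thesis .
  qed
  have "\<forall>\<^sub>F h in at_right 0. 0 < h \<and> h < min r \<delta> / N"
    unfolding eventually_at_right_field using r \<delta> N by (intro exI[of _ "min r \<delta> / N"]) auto
  then show ?thesis
  proof eventually_elim
    case (elim h)
    have inU: "x + a *\<^sub>R u + b *\<^sub>R v \<in> U" if "0 \<le> a" "a \<le> h" "0 \<le> b" "b \<le> h" for a b
      using near[OF that] elim r(2) by (auto simp: dist_commute)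
    obtain \<xi> \<eta> where \<xi>\<eta>: "0 < \<xi>" "\<xi> < h" "0 < \<eta>" "\<eta> < h"
      "F (x + h *\<^sub>R u + h *\<^sub>R v) - F (x + h *\<^sub>R u) - F (x + h *\<^sub>R v) + F x
        = h\<^sup>2 * (H (x + \<xi> *\<^sub>R u + \<eta> *\<^sub>R v) v \<bullet> u)"
      using second_difference_mean_value[OF _ inU] elim by blast
    have "dist (x + \<xi> *\<^sub>R u + \<eta> *\<^sub>R v) x < \<delta>" using near[of \<xi> h \<eta>] \<xi>\<eta> elim by simp
    then have "norm (F2 (x + \<xi> *\<^sub>R u + \<eta> *\<^sub>R v) - F2 x) \<le> e"
      using \<delta>(2) by (simp add: dist_norm less_imp_le)
    then have "\<bar>H (x + \<xi> *\<^sub>R u + \<eta> *\<^sub>R v) v \<bullet> u - H x v \<bullet> u\<bar> \<le> e * (norm v * norm u)"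
      by (rule blinfun_inner_diff_le)
    then show ?case using \<xi>\<eta>(5) elim by simp
  qed
qed

lemma hess_symmetric:
  assumes x: "x \<in> U"
  shows "H x u \<bullet> v = H x v \<bullet> u"
proof -
  let ?C = "norm u * norm v"
  define D where "D p q h = (F (x + h *\<^sub>R p + h *\<^sub>R q) - F (x + h *\<^sub>R p) - F (x + h *\<^sub>R q) + F x) / h\<^sup>2"
    for p q h
  have D_sym: "D v u h = D u v h" for h unfolding D_def by (simp add: algebra_simps)
  have close: "\<bar>H x u \<bullet> v - H x v \<bullet> u\<bar> \<le> 2 * e * ?C" if e: "e > 0" for e
  proof -
    have "\<forall>\<^sub>F h in at_right 0. \<bar>D u v h - H x v \<bullet> u\<bar> \<le> e * ?C \<and> \<bar>D u v h - H x u \<bullet> v\<bar> \<le> e * ?C"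
      using second_difference_near_hess[OF x e, of u v] second_difference_near_hess[OF x e, of v u]
      unfolding D_def[symmetric] D_sym by eventually_elim (simp add: mult.commute)
    then obtain h where "\<bar>D u v h - H x v \<bullet> u\<bar> \<le> e * ?C" "\<bar>D u v h - H x u \<bullet> v\<bar> \<le> e * ?C"
      using eventually_happens'[OF trivial_limit_at_right_real] by blast
    then show ?thesis by linarith
  qed
  have "\<bar>H x u \<bullet> v - H x v \<bullet> u\<bar> \<le> 0"
  proof (rule field_le_epsilon)
    fix \<epsilon> :: real assume \<epsilon>: "\<epsilon> > 0"
    have pos: "0 < 2 * ?C + 1" by (simp add: add_nonneg_pos)
    have "2 * (\<epsilon> / (2 * ?C + 1)) * ?C = (2 * ?C) * \<epsilon> / (2 * ?C + 1)" by simp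
    also have "\<dots> \<le> \<epsilon>" using \<epsilon> pos by (simp add: divide_le_eq mult_right_mono)
    finally show "\<bar>H x u \<bullet> v - H x v \<bullet> u\<bar> \<le> 0 + \<epsilon>"
      using close[of "\<epsilon> / (2 * ?C + 1)"] \<epsilon> pos by simp
  qed
  then show ?thesis by simp
qed

lemma frontier_K_iff: "p \<in> frontier K \<longleftrightarrow> p \<in> K \<and> p \<notin> U"
  using K_closed by (simp add: frontier_def closure_closed)

text \<open>If \<open>\<langle>\<nabla>\<^sup>2F(x) u, u\<rangle> = 0\<close>, self-concordance keeps the Hessian degenerate along the line
  through \<open>x\<close> in direction \<open>u\<close>, so \<open>F\<close> is constant on it; since \<open>F\<close> blows up at the boundary,
  the whole ray stays in \<open>int K\<close>, and then \<open>u \<in> K\<close>. The same holds for \<open>-u\<close>, and \<open>K\<close> is pointed.\<close>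
lemma hess_vanishes_along_line:
  assumes x: "x \<in> U" and h0: "H x u \<bullet> u = 0" and t: "x + t *\<^sub>R u \<in> U"
  shows "H (x + t *\<^sub>R u) u \<bullet> u = 0"
proof (rule ccontr)
  let ?p = "H (x + t *\<^sub>R u) u \<bullet> u"
  assume "?p \<noteq> 0"
  then have pp: "?p > 0" using hess_nonneg[OF t, of u] by simp
  define q where "q = \<bar>t\<bar> + 1 / sqrt ?p + 1"
  have qpos: "q > 0" unfolding q_def using pp by (simp add: add_nonneg_pos)
  define \<epsilon> where "\<epsilon> = 1 / q\<^sup>2"
  have epos: "\<epsilon> > 0" unfolding \<epsilon>_def using qpos by simp
  have se: "1 / sqrt \<epsilon> = q" unfolding \<epsilon>_def using qpos by (simp add: real_sqrt_divide)
  have x0: "x + 0 *\<^sub>R u \<in> U" using x by simp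
  from hess_inverse_sqrt_lipschitz[OF x0 t epos] h0
  have "\<bar>1 / sqrt (?p + \<epsilon>) - 1 / sqrt \<epsilon>\<bar> \<le> \<bar>t\<bar>" by simp
  then have "1 / sqrt (?p + \<epsilon>) \<ge> q - \<bar>t\<bar>" using se by linarith
  then have A: "1 / sqrt (?p + \<epsilon>) \<ge> 1 / sqrt ?p + 1" unfolding q_def by simp
  have "1 / sqrt (?p + \<epsilon>) \<le> 1 / sqrt ?p"
    using pp epos by (intro divide_left_mono real_sqrt_le_mono) auto
  with A show False by simp
qed

lemma F_constant_along_line:
  assumes x: "x \<in> U" and h0: "H x u \<bullet> u = 0" and t: "x + t *\<^sub>R u \<in> U"
  shows "F (x + t *\<^sub>R u) = F x"
proof -
  have g0: "F1 (x + s *\<^sub>R u) \<bullet> u = 0" if "x + s *\<^sub>R u \<in> U" for s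
  proof -
    have "(F1 (x + s *\<^sub>R u) \<bullet> u)\<^sup>2 \<le> 0"
      using barrier_param[OF that, of u] hess_vanishes_along_line[OF x h0 that] by simp
    then show ?thesis by simp
  qed
  have sub: "x + s *\<^sub>R u \<in> U" if "min 0 t \<le> s" "s \<le> max 0 t" for s
  proof -
    have "s \<in> closed_segment 0 t" using that by (auto simp: closed_segment_eq_real_ivl)
    then show ?thesis using x t convex_line_preimage[OF U_convex, of x u]
      by (auto dest: convex_contains_segment[THEN iffD1, rule_format, of _ 0 t])
  qed
  consider "t = 0" | "0 < t" | "t < 0" by linarith
  then show ?thesis
  proof cases
    case 2
    have "\<exists>z>0. z < t \<and> F (x + t *\<^sub>R u) - F (x + 0 *\<^sub>R u) = (t - 0) * (F1 (x + z *\<^sub>R u) \<bullet> u)"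
      by (rule MVT2[OF 2]) (rule F_along_line_has_derivative, rule sub, use 2 in auto)
    then obtain z where z: "0 < z" "z < t"
      "F (x + t *\<^sub>R u) - F (x + 0 *\<^sub>R u) = (t - 0) * (F1 (x + z *\<^sub>R u) \<bullet> u)" by blast
    have "F1 (x + z *\<^sub>R u) \<bullet> u = 0" by (rule g0, rule sub) (use z in auto)
    then show ?thesis using z by simp
  next
    case 3
    have "\<exists>z>t. z < 0 \<and> F (x + 0 *\<^sub>R u) - F (x + t *\<^sub>R u) = (0 - t) * (F1 (x + z *\<^sub>R u) \<bullet> u)"
      by (rule MVT2[OF 3]) (rule F_along_line_has_derivative, rule sub, use 3 in auto)
    then obtain z where z: "t < z" "z < 0"
      "F (x + 0 *\<^sub>R u) - F (x + t *\<^sub>R u) = (0 - t) * (F1 (x + z *\<^sub>R u) \<bullet> u)" by blast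
    have "F1 (x + z *\<^sub>R u) \<bullet> u = 0" by (rule g0, rule sub) (use z in auto)
    then show ?thesis using z by simp
  qed simp
qed

lemma first_exit_to_frontier:
  assumes x: "x \<in> U" and out: "x + t *\<^sub>R u \<notin> U" and t: "t \<ge> 0"
  obtains T where "T > 0" "x + T *\<^sub>R u \<in> frontier K" "\<And>s. 0 \<le> s \<Longrightarrow> s < T \<Longrightarrow> x + s *\<^sub>R u \<in> U"
proof -
  define S where "S = {s. s \<ge> 0 \<and> x + s *\<^sub>R u \<notin> U}"
  have S: "S \<noteq> {}" "bdd_below S" using out t unfolding S_def by (auto intro: bdd_belowI[of _ 0])
  have "closed S"
  proof -
    have "S = {0..} \<inter> (\<lambda>s. x + s *\<^sub>R u) -` (- U)" unfolding S_def by auto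
    moreover have "closed ((\<lambda>s::real. x + s *\<^sub>R u) -` (- U))"
      by (rule closed_vimage) (auto intro!: continuous_intros)
    ultimately show ?thesis by (simp add: closed_Int)
  qed
  define T where "T = Inf S"
  have TS: "T \<in> S" unfolding T_def by (rule closed_contains_Inf[OF S \<open>closed S\<close>])
  have below: "x + s *\<^sub>R u \<in> U" if "0 \<le> s" "s < T" for s
    using that cInf_lower[OF _ S(2), of s] unfolding T_def S_def by force
  have T: "T > 0" using TS x unfolding S_def by (cases "T = 0") auto
  have "x + T *\<^sub>R u \<in> K"
  proof (rule Lim_in_closed_set[OF K_closed])
    show "\<forall>\<^sub>F s in at_left T. x + s *\<^sub>R u \<in> K"
      using eventually_at_left_real[OF T] by eventually_elim (use below U_subset_K in auto)
    show "((\<lambda>s. x + s *\<^sub>R u) \<longlongrightarrow> x + T *\<^sub>R u) (at_left T)" by (intro tendsto_intros)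
  qed simp
  then have "x + T *\<^sub>R u \<in> frontier K" using TS unfolding frontier_K_iff S_def by auto
  then show ?thesis using that T below by blast
qed

lemma degenerate_ray_in_U:
  assumes x: "x \<in> U" and h0: "H x u \<bullet> u = 0" and "u \<noteq> 0" and "t \<ge> 0"
  shows "x + t *\<^sub>R u \<in> U"
proof (rule ccontr)
  assume "x + t *\<^sub>R u \<notin> U"
  then obtain T where T: "T > 0" "x + T *\<^sub>R u \<in> frontier K" "\<And>s. 0 \<le> s \<Longrightarrow> s < T \<Longrightarrow> x + s *\<^sub>R u \<in> U"
    using first_exit_to_frontier[OF x _ \<open>t \<ge> 0\<close>] by blast
  have ev: "\<forall>\<^sub>F s in at_left T. s \<in> {0<..<T}" using eventually_at_left_real[OF T(1)] .
  show False
  proof (rule bounded_approach_to_frontier[OF T(2), of "\<lambda>s. x + s *\<^sub>R u" "at_left T" "F x"])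
    show "filterlim (\<lambda>s. x + s *\<^sub>R u) (at (x + T *\<^sub>R u) within U) (at_left T)"
      unfolding filterlim_at
    proof
      show "\<forall>\<^sub>F s in at_left T. x + s *\<^sub>R u \<in> U \<and> x + s *\<^sub>R u \<noteq> x + T *\<^sub>R u"
        using ev by eventually_elim (use T(3) \<open>u \<noteq> 0\<close> in auto)
    qed (intro tendsto_intros)
    show "\<forall>\<^sub>F s in at_left T. F (x + s *\<^sub>R u) \<le> F x"
      using ev by eventually_elim (use T(3) F_constant_along_line[OF x h0] in auto)
  qed simp
qed

lemma ray_direction_in_K:
  assumes x: "x \<in> U" and ray: "\<And>t. t \<ge> 0 \<Longrightarrow> x + t *\<^sub>R u \<in> U"
  shows "u \<in> K"
proof -
  have lim: "((\<lambda>t::real. inverse t *\<^sub>R x + u) \<longlongrightarrow> 0 *\<^sub>R x + u) at_top"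
  proof -
    have "((\<lambda>t::real. inverse t) \<longlongrightarrow> 0) at_top" by (rule tendsto_inverse_0_at_top[OF filterlim_ident])
    then show ?thesis by (intro tendsto_add tendsto_scaleR tendsto_const)
  qed
  have ev: "eventually (\<lambda>t::real. inverse t *\<^sub>R x + u \<in> K) at_top"
    using eventually_gt_at_top[of 0]
  proof eventually_elim
    case (elim t)
    have "inverse t *\<^sub>R (x + t *\<^sub>R u) \<in> K" using K_scaleR[OF U_subset_K[OF ray[of t]]] elim by simp
    then show ?case using elim by (simp add: algebra_simps)
  qed
  show ?thesis using Lim_in_closed_set[OF K_closed ev _ lim] by simp
qed

lemma hess_nondegenerate:
  assumes x: "x \<in> U" and h0: "H x u \<bullet> u = 0"
  shows "u = 0"
proof (rule ccontr)
  assume unz: "u \<noteq> 0"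
  have "u \<in> K" using ray_direction_in_K[OF x degenerate_ray_in_U[OF x h0 unz]] .
  moreover have hm: "H x (- u) \<bullet> (- u) = 0" using h0 by (simp add: blinfun.minus_right)
  have "\<And>t. t \<ge> 0 \<Longrightarrow> x + t *\<^sub>R (- u) \<in> U" by (rule degenerate_ray_in_U[OF x hm]) (use unz in auto)
  then have "- u \<in> K" by (rule ray_direction_in_K[OF x])
  ultimately show False using K_pointed unz by blast
qed

lemma hess_pos_def:
  assumes x: "x \<in> U"
  shows "linear (H x)" "symmetric_map (H x)" "pos_def_map (H x)"
proof -
  show "linear (H x)" by (simp add: blinfun.bounded_linear_right bounded_linear.linear)
  show "symmetric_map (H x)" unfolding symmetric_map_def using hess_symmetric[OF x] by blast
  show "pos_def_map (H x)" unfolding pos_def_map_def using hess_nonneg[OF x] hess_nondegenerate[OF x]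
    by (metis order_le_imp_less_or_eq)
qed

lemma U_add_ray:
  assumes "p \<in> U" "z \<in> K" "t \<ge> 0"
  shows "p + t *\<^sub>R z \<in> U"
  using U_add_K[OF assms(1) K_scaleR[OF assms(2,3)]] .

text \<open>By the barrier inequality \<open>\<langle>\<nabla>F, z\<rangle>\<^sup>2 \<le> \<nu> \<langle>\<nabla>\<^sup>2F z, z\<rangle>\<close>, the reciprocal of
  \<open>r(t) = \<langle>\<nabla>F(p + t z), z\<rangle>\<close> decreases at rate at least \<open>1/\<nu>\<close> while \<open>r > 0\<close>, so a positive
  \<open>r(0)\<close> would make \<open>1/r\<close> vanish by time \<open>\<nu>/r(0)\<close>.\<close>
lemma grad_inner_K_nonpos:
  assumes p: "p \<in> U" and z: "z \<in> K"
  shows "F1 p \<bullet> z \<le> 0"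
proof (rule ccontr)
  assume "\<not> F1 p \<bullet> z \<le> 0"
  then have apos: "F1 p \<bullet> z > 0" by simp
  define a where "a = F1 p \<bullet> z"
  define r where "r t = F1 (p + t *\<^sub>R z) \<bullet> z" for t
  define r' where "r' t = H (p + t *\<^sub>R z) z \<bullet> z" for t
  have dr: "(r has_real_derivative r' t) (at t)" if "t \<ge> 0" for t
    unfolding r_def r'_def by (rule grad_along_line_has_derivative[OF U_add_ray[OF p z that]])
  have r'nn: "r' t \<ge> 0" if "t \<ge> 0" for t unfolding r'_def
    by (rule hess_nonneg[OF U_add_ray[OF p z that]])
  have rge: "r t \<ge> a" if "t \<ge> 0" for t
  proof -
    have "r 0 \<le> r t"
      by (rule DERIV_nonneg_imp_nondecreasing[OF that]) (use dr r'nn in auto)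
    then show ?thesis unfolding a_def r_def by simp
  qed
  have rpos: "r t > 0" if "t \<ge> 0" for t using rge[OF that] apos a_def by simp
  define w' where "w' t = - (r' t * inverse (r t ^ Suc (Suc 0)))" for t
  have dw: "((\<lambda>t. inverse (r t)) has_real_derivative w' t) (at t)" if "t \<ge> 0" for t
    unfolding w'_def by (rule DERIV_inverse_fun[OF dr[OF that]]) (use rpos[OF that] in simp)
  have w'le: "w' t \<le> - 1 / \<nu>" if "t \<ge> 0" for t
  proof -
    have "(r t)\<^sup>2 \<le> \<nu> * r' t" unfolding r_def r'_def by (rule barrier_param[OF U_add_ray[OF p z that]])
    then have "1 / \<nu> \<le> r' t / (r t)\<^sup>2" using nu_pos rpos[OF that] by (simp add: field_simps)
    then show ?thesis unfolding w'_def by (simp add: power2_eq_square divide_inverse)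
  qed
  define T where "T = \<nu> / a"
  have Tpos: "T > 0" unfolding T_def using nu_pos apos a_def by simp
  from MVT2[OF Tpos dw] obtain \<xi> where xi: "0 < \<xi>" "\<xi> < T"
    "inverse (r T) - inverse (r 0) = (T - 0) * w' \<xi>" by auto
  have "w' \<xi> \<le> - 1 / \<nu>" using w'le[of \<xi>] xi by simp
  then have "T * w' \<xi> \<le> T * (- 1 / \<nu>)" by (rule mult_left_mono) (use Tpos in simp)
  then have "(T - 0) * w' \<xi> \<le> T * (- 1 / \<nu>)" by simp
  also have "\<dots> = - inverse a" unfolding T_def using nu_pos apos a_def by (simp add: field_simps)
  finally have descent: "(T - 0) * w' \<xi> \<le> - inverse a" .
  have "r 0 = a" unfolding r_def a_def by simp
  then have "inverse (r T) - inverse a \<le> - inverse a" using xi(3) descent by simp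
  then have "inverse (r T) \<le> 0" by linarith
  moreover have "inverse (r T) > 0" using rpos[of T] Tpos by simp
  ultimately show False by simp
qed

lemma hess_along_ray_lower:
  assumes x: "x \<in> U" and z: "z \<in> K" and t: "t \<ge> 0" and e: "\<epsilon> > 0"
  shows "inverse ((1 / sqrt (H x z \<bullet> z + \<epsilon>) + t)\<^sup>2) - \<epsilon> \<le> H (x + t *\<^sub>R z) z \<bullet> z"
proof -
  define c where "c = 1 / sqrt (H x z \<bullet> z + \<epsilon>)"
  define \<phi> where "\<phi> = H (x + t *\<^sub>R z) z \<bullet> z"
  have c: "c > 0" unfolding c_def using hess_nonneg[OF x, of z] e by simp
  have pos: "\<phi> + \<epsilon> > 0" unfolding \<phi>_def using hess_nonneg[OF U_add_ray[OF x z t], of z] e by simp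
  have "1 / sqrt (\<phi> + \<epsilon>) \<le> c + t"
    using hess_inverse_sqrt_lipschitz[of x 0 z t \<epsilon>] x U_add_ray[OF x z t] e t
    unfolding c_def \<phi>_def by simp
  then have "1 \<le> (c + t) * sqrt (\<phi> + \<epsilon>)" using pos by (simp add: divide_le_eq mult.commute)
  then have "1 \<le> ((c + t) * sqrt (\<phi> + \<epsilon>))\<^sup>2" by (metis one_le_power)
  also have "\<dots> = (c + t)\<^sup>2 * (\<phi> + \<epsilon>)" using pos by (simp add: power_mult_distrib)
  finally have "inverse ((c + t)\<^sup>2) \<le> \<phi> + \<epsilon>" using c t
    by (simp add: inverse_eq_divide divide_le_eq mult.commute)
  then show ?thesis unfolding c_def \<phi>_def by simp
qed

lemma hess_norm_le_grad_inner:
  assumes x: "x \<in> U" and z: "z \<in> K"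
  shows "sqrt (H x z \<bullet> z) \<le> - (F1 x \<bullet> z)"
proof -
  have approx: "sqrt (H x z \<bullet> z) \<le> - (F1 x \<bullet> z) + 2 * sqrt \<epsilon>" if e: "\<epsilon> > 0" for \<epsilon>
  proof -
    define c where "c = 1 / sqrt (H x z \<bullet> z + \<epsilon>)"
    have c: "c > 0" unfolding c_def using hess_nonneg[OF x, of z] e by simp
    define T where "T = 1 / sqrt \<epsilon>"
    have T: "T > 0" unfolding T_def using e by simp
    text \<open>\<open>k\<close> is nondecreasing by \<open>hess_along_ray_lower\<close>, and \<open>\<langle>\<nabla>F, z\<rangle> \<le> 0\<close> along the ray.\<close>
    define k where "k t = F1 (x + t *\<^sub>R z) \<bullet> z + inverse (c + t) + \<epsilon> * t" for t
    have "k 0 \<le> k T"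
    proof (rule DERIV_nonneg_imp_nondecreasing[of 0 T k])
      fix t :: real assume t: "0 \<le> t" "t \<le> T"
      have "((\<lambda>t. c + t) has_real_derivative 1) (at t)" by (auto intro!: derivative_eq_intros)
      from DERIV_inverse_fun[OF this] c t
      have "((\<lambda>t. inverse (c + t)) has_real_derivative - inverse ((c + t)\<^sup>2)) (at t)"
        by (simp add: power2_eq_square)
      then have "(k has_real_derivative H (x + t *\<^sub>R z) z \<bullet> z + - inverse ((c + t)\<^sup>2) + \<epsilon>) (at t)"
        unfolding k_def
        by (intro DERIV_add DERIV_cmult_Id grad_along_line_has_derivative U_add_ray[OF x z t(1)])
      moreover have "0 \<le> H (x + t *\<^sub>R z) z \<bullet> z + - inverse ((c + t)\<^sup>2) + \<epsilon>"
        using hess_along_ray_lower[OF x z t(1) e] unfolding c_def by simp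
      ultimately show "\<exists>y. (k has_real_derivative y) (at t) \<and> 0 \<le> y" by blast
    qed (use T in simp)
    moreover have "k 0 = F1 x \<bullet> z + sqrt (H x z \<bullet> z + \<epsilon>)" unfolding k_def c_def by simp
    moreover have "k T \<le> 2 * sqrt \<epsilon>"
    proof -
      have "F1 (x + T *\<^sub>R z) \<bullet> z \<le> 0" using grad_inner_K_nonpos[OF U_add_ray[OF x z] z] T by simp
      moreover have "inverse (c + T) \<le> inverse T" using c T by (simp add: le_imp_inverse_le)
      moreover have "inverse T = sqrt \<epsilon>" "\<epsilon> * T = sqrt \<epsilon>" unfolding T_def using e
        by (simp_all add: real_div_sqrt)
      ultimately show ?thesis unfolding k_def by simp
    qed
    moreover have "sqrt (H x z \<bullet> z) \<le> sqrt (H x z \<bullet> z + \<epsilon>)" using e by simp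
    ultimately show ?thesis by linarith
  qed
  show ?thesis
  proof (rule field_le_epsilon)
    fix e :: real assume "e > 0"
    with approx[of "(e / 2)\<^sup>2"] show "sqrt (H x z \<bullet> z) \<le> - (F1 x \<bullet> z) + e" by simp
  qed
qed

lemma neg_grad_in_interior_dual_cone:
  assumes x: "x \<in> U"
  shows "- F1 x \<in> interior (dual_cone K)"
proof -
  obtain m where m: "m > 0" "\<And>u. m * (norm u)\<^sup>2 \<le> H x u \<bullet> u"
    using pos_def_map_coercive[OF hess_pos_def(1,3)[OF x]] by blast
  have "ball (- F1 x) (sqrt m) \<subseteq> dual_cone K"
  proof
    fix s' assume s': "s' \<in> ball (- F1 x) (sqrt m)"
    show "s' \<in> dual_cone K" unfolding dual_cone_def
    proof (intro CollectI ballI)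
      fix z assume z: "z \<in> K"
      have "sqrt m * norm z = sqrt (m * (norm z)\<^sup>2)" by (simp add: real_sqrt_mult)
      also have "\<dots> \<le> sqrt (H x z \<bullet> z)" using m(2) by simp
      also have "\<dots> \<le> - (F1 x \<bullet> z)" by (rule hess_norm_le_grad_inner[OF x z])
      finally have A: "sqrt m * norm z \<le> - (F1 x \<bullet> z)" .
      have "\<bar>(s' + F1 x) \<bullet> z\<bar> \<le> norm (s' + F1 x) * norm z" by (rule Cauchy_Schwarz_ineq2)
      also have "\<dots> \<le> sqrt m * norm z"
        using s' by (intro mult_right_mono) (auto simp: dist_norm norm_minus_commute algebra_simps)
      finally have B: "\<bar>(s' + F1 x) \<bullet> z\<bar> \<le> sqrt m * norm z" .
      have "s' \<bullet> z = - (F1 x \<bullet> z) + (s' + F1 x) \<bullet> z" by (simp add: inner_add_left)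
      then show "0 \<le> s' \<bullet> z" using A B by linarith
    qed
  qed
  then show ?thesis using m(1) mem_interior by (metis real_sqrt_gt_0_iff)
qed

lemma U_segment:
  assumes "x \<in> U" "y \<in> U" "0 \<le> t" "t \<le> 1"
  shows "x + t *\<^sub>R (y - x) \<in> U"
proof -
  have "(1 - t) *\<^sub>R x + t *\<^sub>R y \<in> U" using U_convex assms unfolding convex_def by auto
  moreover have "(1 - t) *\<^sub>R x + t *\<^sub>R y = x + t *\<^sub>R (y - x)" by (simp add: algebra_simps)
  ultimately show ?thesis by simp
qed

lemma grad_inj_on_U:
  assumes x: "x \<in> U" and y: "y \<in> U" and eq: "F1 x = F1 y"
  shows "x = y"
proof (rule ccontr)
  assume ne: "x \<noteq> y"
  define d where "d = y - x"
  have dnz: "d \<noteq> 0" using ne unfolding d_def by simp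
  have D: "((\<lambda>t. F1 (x + t *\<^sub>R d) \<bullet> d) has_real_derivative H (x + t *\<^sub>R d) d \<bullet> d) (at t)"
    if "0 \<le> t" "t \<le> 1" for t
    by (rule grad_along_line_has_derivative) (use U_segment[OF x y that] d_def in simp)
  obtain \<xi> where xi: "0 < \<xi>" "\<xi> < 1"
    "F1 (x + 1 *\<^sub>R d) \<bullet> d - F1 (x + 0 *\<^sub>R d) \<bullet> d = (1 - 0) * (H (x + \<xi> *\<^sub>R d) d \<bullet> d)"
    using MVT2[OF zero_less_one D] by blast
  have xy: "x + 1 *\<^sub>R d = y" unfolding d_def by simp
  have "H (x + \<xi> *\<^sub>R d) d \<bullet> d = 0" using xi(3) eq xy by simp
  moreover have mem: "x + \<xi> *\<^sub>R d \<in> U" using U_segment[OF x y, of \<xi>] xi unfolding d_def by simp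
  ultimately have "d = 0" using hess_nondegenerate by blast
  with dnz show False by simp
qed

lemma F_above_tangent:
  assumes x: "x \<in> U" and y: "y \<in> U"
  shows "F y \<ge> F x + F1 x \<bullet> (y - x)"
proof -
  define A where "A = {t::real. x + t *\<^sub>R (y - x) \<in> U}"
  define \<zeta> where "\<zeta> t = F (x + t *\<^sub>R (y - x))" for t
  have Aconv: "convex A" unfolding A_def by (rule convex_line_preimage[OF U_convex])
  have Aopen: "open A" unfolding A_def
    by (rule open_vimage[of U "\<lambda>t. x + t *\<^sub>R (y - x)", unfolded vimage_def]) (auto intro!: continuous_intros)
  have 0: "0 \<in> interior A" using Aopen x unfolding A_def by (simp add: interior_open)
  have 1: "1 \<in> A" using y unfolding A_def by simp
  have cv: "convex_on A \<zeta>"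
  proof (rule convex_onI[OF _ Aconv])
    fix s t and a :: real assume "0 < a" "a < 1" "s \<in> A" "t \<in> A"
    then have st: "s \<in> A" "t \<in> A" "0 \<le> a" "a \<le> 1" by auto
    have e: "x + ((1 - a) * s + a * t) *\<^sub>R (y - x)
        = (1 - a) *\<^sub>R (x + s *\<^sub>R (y - x)) + a *\<^sub>R (x + t *\<^sub>R (y - x))"
      by (simp add: algebra_simps)
    show "\<zeta> ((1 - a) *\<^sub>R s + a *\<^sub>R t) \<le> (1 - a) * \<zeta> s + a * \<zeta> t"
      unfolding \<zeta>_def using convex_onD[OF F_convex, of a "x + s *\<^sub>R (y - x)" "x + t *\<^sub>R (y - x)"] st e
      unfolding A_def by simp
  qed
  have der: "(\<zeta> has_real_derivative F1 x \<bullet> (y - x)) (at 0 within A)"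
    unfolding \<zeta>_def using F_along_line_has_derivative[of x 0 "y - x"] x
      by (simp add: has_field_derivative_at_within)
  have "\<zeta> 1 - \<zeta> 0 \<ge> F1 x \<bullet> (y - x) * (1 - 0)"
    by (rule convex_on_imp_above_tangent[OF cv convex_connected[OF Aconv] 0 1 der])
  then show ?thesis unfolding \<zeta>_def by simp
qed

lemma dual_objective_coercive:
  assumes s: "s \<in> interior (dual_cone K)"
  obtains \<delta> C where "\<delta> > 0" "\<And>x. x \<in> U \<Longrightarrow> \<delta> * norm x + C \<le> s \<bullet> x + F x"
proof -
  obtain \<delta> where \<delta>: "\<delta> > 0" "ball s \<delta> \<subseteq> dual_cone K" using s mem_interior by blast
  obtain x1 where x1: "x1 \<in> U" using U_nonempty by blast
  define t where "t = 4 * norm (F1 x1) / \<delta> + 1"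
  have t: "t > 0" unfolding t_def using \<delta> by (simp add: add_nonneg_pos)
  define x0 where "x0 = t *\<^sub>R x1"
  have x0: "x0 \<in> U" unfolding x0_def by (rule U_scaleR[OF x1 t])
  have small_grad: "norm (F1 x0) \<le> \<delta> / 4"
  proof -
    have "t * norm (F1 x0) = norm (F1 x1)"
      using arg_cong[OF grad_homogeneous[OF x1 t], of norm] t unfolding x0_def by simp
    also have "\<dots> \<le> t * (\<delta> / 4)" unfolding t_def using \<delta> by (simp add: field_simps)
    finally show ?thesis using t by simp
  qed
  show ?thesis
  proof (rule that[of "\<delta> / 4" "F x0 - F1 x0 \<bullet> x0"])
    show "\<delta> / 4 > 0" using \<delta> by simp
    fix x assume x: "x \<in> U"
    have "F x0 + F1 x0 \<bullet> (x - x0) \<le> F x" by (rule F_above_tangent[OF x0 x])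
    moreover have "\<delta> / 2 * norm x \<le> s \<bullet> x" by (rule dual_cone_ball_margin[OF \<delta> U_subset_K[OF x]])
    moreover have "\<bar>F1 x0 \<bullet> x\<bar> \<le> \<delta> / 4 * norm x"
      using Cauchy_Schwarz_ineq2[of "F1 x0" x] mult_right_mono[OF small_grad norm_ge_zero[of x]]
        by linarith
    ultimately show "\<delta> / 4 * norm x + (F x0 - F1 x0 \<bullet> x0) \<le> s \<bullet> x + F x"
      by (simp add: inner_diff_right)
  qed
qed

lemma bounded_sublevel_closed:
  assumes bdd: "bounded {x \<in> U. s \<bullet> x + F x \<le> M}"
  shows "closed {x \<in> U. s \<bullet> x + F x \<le> M}" (is "closed ?L")
  unfolding closed_limpt
proof (intro allI impI)
  fix q assume q: "q islimpt ?L"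
  obtain B where B: "\<And>x. x \<in> ?L \<Longrightarrow> norm x \<le> B" using bdd unfolding bounded_iff by blast
  have "q islimpt K" using islimpt_subset[OF q] U_subset_K by blast
  then have "q \<in> K" using K_closed closed_limpt by blast
  have nb: "at q within ?L \<noteq> bot" using q trivial_limit_within by blast
  have qU: "q \<in> U"
  proof (rule ccontr)
    assume "q \<notin> U"
    then have "q \<in> frontier K" using \<open>q \<in> K\<close> frontier_K_iff by blast
    then show False
    proof (rule bounded_approach_to_frontier[of _ "\<lambda>x. x" "at q within ?L" "M + norm s * B"])
      show "filterlim (\<lambda>x. x) (at q within U) (at q within ?L)"
        unfolding filterlim_def by (simp add: filtermap_ident at_le)
      have "F x \<le> M + norm s * B" if "x \<in> ?L" for x
        using that Cauchy_Schwarz_ineq2[of s x] mult_left_mono[OF B[OF that] norm_ge_zero[of s]] by auto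
      then show "\<forall>\<^sub>F x in at q within ?L. F x \<le> M + norm s * B"
        by (simp add: eventually_at_filter)
    qed (rule nb)
  qed
  have "isCont (\<lambda>x. s \<bullet> x + F x) q"
    using has_derivative_continuous[OF F_deriv[OF qU]] by (intro continuous_intros)
  then have "((\<lambda>x. s \<bullet> x + F x) \<longlongrightarrow> s \<bullet> q + F q) (at q within ?L)"
    unfolding isCont_def by (rule tendsto_within_subset) simp
  then have "s \<bullet> q + F q \<le> M"
    by (rule tendsto_upperbound) (auto simp: eventually_at_filter nb)
  then show "q \<in> ?L" using qU by simp
qed

lemma dual_objective_has_min:
  assumes s: "s \<in> interior (dual_cone K)"
  obtains x where "x \<in> U" "\<And>y. y \<in> U \<Longrightarrow> s \<bullet> x + F x \<le> s \<bullet> y + F y"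
proof -
  define \<Phi> where "\<Phi> x = s \<bullet> x + F x" for x
  obtain \<delta> C where \<delta>: "\<delta> > 0" and coercive: "\<And>x. x \<in> U \<Longrightarrow> \<delta> * norm x + C \<le> \<Phi> x"
    using dual_objective_coercive[OF s] unfolding \<Phi>_def by blast
  obtain x0 where x0: "x0 \<in> U" using U_nonempty by blast
  define L where "L = {x \<in> U. \<Phi> x \<le> \<Phi> x0}"
  have "norm x \<le> (\<Phi> x0 - C) / \<delta>" if "x \<in> L" for x
    using coercive[of x] that \<delta> unfolding L_def by (simp add: field_simps)
  then have "bounded L" unfolding bounded_iff by blast
  moreover from this have "closed L" unfolding L_def \<Phi>_def by (rule bounded_sublevel_closed)
  ultimately have compact: "compact L" by (simp add: compact_eq_bounded_closed)
  have nonempty: "L \<noteq> {}" using x0 unfolding L_def by auto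
  have cont: "continuous_on L \<Phi>"
  proof (rule continuous_at_imp_continuous_on, rule ballI)
    fix x assume "x \<in> L"
    then have "isCont F x" using has_derivative_continuous[OF F_deriv] unfolding L_def by blast
    then show "isCont \<Phi> x" unfolding \<Phi>_def by (intro continuous_intros)
  qed
  obtain xm where xm: "xm \<in> L" "\<And>y. y \<in> L \<Longrightarrow> \<Phi> xm \<le> \<Phi> y"
    using continuous_attains_inf[OF compact nonempty cont] by blast
  show ?thesis
  proof (rule that)
    show "xm \<in> U" using xm(1) unfolding L_def by simp
    fix y assume y: "y \<in> U"
    have "\<Phi> xm \<le> \<Phi> y"
    proof (cases "y \<in> L")
      case False
      then have "\<Phi> x0 < \<Phi> y" using y unfolding L_def by auto
      moreover have "\<Phi> xm \<le> \<Phi> x0" using xm(1) unfolding L_def by simp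
      ultimately show ?thesis by simp
    qed (rule xm(2))
    then show "s \<bullet> xm + F xm \<le> s \<bullet> y + F y" unfolding \<Phi>_def .
  qed
qed

lemma grad_surj_onto_dual_interior:
  assumes s: "s \<in> interior (dual_cone K)"
  shows "\<exists>x\<in>U. F1 x = - s"
proof -
  obtain x where x: "x \<in> U" and min: "\<And>y. y \<in> U \<Longrightarrow> s \<bullet> x + F x \<le> s \<bullet> y + F y"
    using dual_objective_has_min[OF s] by blast
  have der: "((\<lambda>x. s \<bullet> x + F x) has_derivative (\<lambda>h. s \<bullet> h + F1 x \<bullet> h)) (at x)"
    by (intro has_derivative_add F_deriv[OF x]) (auto intro!: derivative_eq_intros)
  have near: "\<forall>\<^sub>F y in at x. s \<bullet> x + F x \<le> s \<bullet> y + F y"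
    using eventually_at_in_open'[OF open_interior x] by eventually_elim (rule min)
  from has_derivative_local_min[OF der near] have "\<And>h. (s + F1 x) \<bullet> h = 0"
    by (metis inner_add_left)
  from this[of "s + F1 x"] have "F1 x = - s" by (simp add: eq_neg_iff_add_eq_0 add.commute)
  then show ?thesis using x by blast
qed

abbreviation "V \<equiv> interior (dual_cone K)"

definition primal_point :: "'a \<Rightarrow> 'a" where "primal_point s = (THE x. x \<in> U \<and> F1 x = - s)"

lemma primal_point_unique:
  assumes "s \<in> V"
  shows "\<exists>!x. x \<in> U \<and> F1 x = - s"
  using grad_surj_onto_dual_interior[OF assms] grad_inj_on_U by metis

lemma primal_point_in_U: "s \<in> V \<Longrightarrow> primal_point s \<in> U"
  using theI'[OF primal_point_unique] unfolding primal_point_def by blast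

lemma grad_primal_point: "s \<in> V \<Longrightarrow> F1 (primal_point s) = - s"
  using theI'[OF primal_point_unique] unfolding primal_point_def by blast

lemma primal_point_grad:
  assumes x: "x \<in> U"
  shows "primal_point (- F1 x) = x"
proof -
  have s: "- F1 x \<in> V" by (rule neg_grad_in_interior_dual_cone[OF x])
  show ?thesis using primal_point_in_U[OF s] grad_primal_point[OF s] grad_inj_on_U[OF _ x] by simp
qed

lemma dual_barrier_eq:
  assumes s: "s \<in> V"
  shows "dual_barrier K F s = - (s \<bullet> primal_point s) - F (primal_point s)"
  unfolding dual_barrier_def
proof (rule cSup_eq_maximum)
  show "- (s \<bullet> primal_point s) - F (primal_point s) \<in> (\<lambda>x. - (s \<bullet> x) - F x) ` U"
    using primal_point_in_U[OF s] by blast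
  fix z assume "z \<in> (\<lambda>x. - (s \<bullet> x) - F x) ` U"
  then obtain y where y: "y \<in> U" "z = - (s \<bullet> y) - F y" by blast
  have "F (primal_point s) + F1 (primal_point s) \<bullet> (y - primal_point s) \<le> F y"
    by (rule F_above_tangent[OF primal_point_in_U[OF s] y(1)])
  then show "z \<le> - (s \<bullet> primal_point s) - F (primal_point s)"
    using y grad_primal_point[OF s] by (simp add: inner_diff_right)
qed

lemma grad_continuous_on: "continuous_on U F1"
  using has_derivative_continuous[OF grad_deriv] by (intro continuous_at_imp_continuous_on) auto

lemma primal_point_has_derivative:
  assumes s: "s \<in> V"
  shows "(primal_point has_derivative (\<lambda>h. inv (H (primal_point s)) (- h))) (at s)"
proof -
  let ?x = "primal_point s"
  have xU: "?x \<in> U" using primal_point_in_U[OF s] .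
  have bij: "bij (H ?x)" using pos_def_map_bij[OF hess_pos_def(1,3)[OF xU]] .
  have "(primal_point has_derivative (\<lambda>h. inv (H ?x) (- h))) (at ((\<lambda>x. - F1 x) ?x))"
  proof (rule has_derivative_inverse_strong[OF open_interior xU])
    show "continuous_on U (\<lambda>x. - F1 x)" by (intro continuous_intros grad_continuous_on)
    show "\<And>x. x \<in> U \<Longrightarrow> primal_point (- F1 x) = x" by (rule primal_point_grad)
    show "((\<lambda>x. - F1 x) has_derivative (\<lambda>h. - H ?x h)) (at ?x)"
      by (rule has_derivative_minus[OF grad_deriv[OF xU]])
    show "(\<lambda>h. - H ?x h) \<circ> (\<lambda>h. inv (H ?x) (- h)) = id"
      using bij by (auto simp: bij_is_surj surj_f_inv_f)
  qed
  then show ?thesis using grad_primal_point[OF s] by simp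
qed

lemma dual_barrier_has_derivative:
  assumes s: "s \<in> V"
  shows "(dual_barrier K F has_derivative (\<lambda>h. - (h \<bullet> primal_point s))) (at s)"
proof -
  let ?x = "primal_point"
  let ?D = "\<lambda>h. inv (H (?x s)) (- h)"
  have dx: "(?x has_derivative ?D) (at s)" by (rule primal_point_has_derivative[OF s])
  have "((\<lambda>s. - (s \<bullet> ?x s) - F (?x s)) has_derivative
      (\<lambda>h. - (s \<bullet> ?D h + h \<bullet> ?x s) - F1 (?x s) \<bullet> ?D h)) (at s)"
  proof (intro has_derivative_diff has_derivative_minus)
    show "((\<lambda>s. s \<bullet> ?x s) has_derivative (\<lambda>h. s \<bullet> ?D h + h \<bullet> ?x s)) (at s)"
      by (rule has_derivative_inner[OF has_derivative_ident dx])
    show "((\<lambda>s. F (?x s)) has_derivative (\<lambda>h. F1 (?x s) \<bullet> ?D h)) (at s)"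
      using has_derivative_compose[OF dx F_deriv[OF primal_point_in_U[OF s]]] by (simp add: o_def)
  qed
  moreover have "(\<lambda>h. - (s \<bullet> ?D h + h \<bullet> ?x s) - F1 (?x s) \<bullet> ?D h) = (\<lambda>h. - (h \<bullet> ?x s))"
    using grad_primal_point[OF s] by (auto simp: algebra_simps)
  ultimately have "((\<lambda>s. - (s \<bullet> ?x s) - F (?x s)) has_derivative (\<lambda>h. - (h \<bullet> ?x s))) (at s)"
    by simp
  then show ?thesis
    by (rule has_derivative_transform_within_open[OF _ open_interior s]) (simp add: dual_barrier_eq)
qed

lemma dual_dikin_ellipsoid:
  assumes x: "x \<in> U" and d: "inv (H x) d \<bullet> d \<le> 1"
  shows "- F1 x + d \<in> dual_cone K"
  unfolding dual_cone_def
proof (intro CollectI ballI)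
  fix z assume z: "z \<in> K"
  note I = pos_def_map_inv[OF hess_pos_def[OF x]]
  define w where "w = inv (H x) d"
  have dw: "H x w = d" unfolding w_def using I(2) .
  have "\<bar>d \<bullet> z\<bar> \<le> sqrt (H x w \<bullet> w) * sqrt (H x z \<bullet> z)"
    using quad_norm_cauchy_schwarz[OF hess_pos_def[OF x], of w z] dw unfolding quad_norm_def by simp
  also have "H x w \<bullet> w = inv (H x) d \<bullet> d" using dw unfolding w_def by (simp add: inner_commute)
  also have "sqrt (inv (H x) d \<bullet> d) * sqrt (H x z \<bullet> z) \<le> 1 * sqrt (H x z \<bullet> z)"
    using d hess_nonneg[OF x, of z] by (intro mult_right_mono) auto
  finally have "\<bar>d \<bullet> z\<bar> \<le> sqrt (H x z \<bullet> z)" by simp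
  moreover have "sqrt (H x z \<bullet> z) \<le> - (F1 x \<bullet> z)" by (rule hess_norm_le_grad_inner[OF x z])
  moreover have "(- F1 x + d) \<bullet> z = - (F1 x \<bullet> z) + d \<bullet> z" by (simp add: inner_add_left inner_diff_left)
  ultimately show "0 \<le> (- F1 x + d) \<bullet> z" by linarith
qed

lemma Gmap_hess_inv_le_nu:
  fixes A :: "'a \<Rightarrow> 'h::euclidean_space"
  assumes x: "x \<in> U" and A: "linear A" "surj A"
  shows "A x \<bullet> inv (Gmap A (H x)) (A x) \<le> \<nu>"
proof -
  note HP = hess_pos_def[OF x]
  note I = pos_def_map_inv[OF HP]
  note GP = Gmap_pos_def[OF A HP]
  note IM = pos_def_map_inv[OF GP(1-3)]
  define M where "M = Gmap A (H x)"
  define w where "w = inv M (A x)"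
  text \<open>\<open>q\<close> is the \<open>\<nabla>\<^sup>2F(x)\<close>-orthogonal projection of \<open>x\<close> onto the range of \<open>[\<nabla>\<^sup>2F(x)]\<^sup>-\<^sup>1 A\<^sup>*\<close>.\<close>
  define q where "q = inv (H x) (adjoint A w)"
  have Mw: "M w = A x" unfolding w_def M_def using IM(2) by simp
  have Aq: "A q = A x" using Mw unfolding M_def Gmap_def q_def by simp
  have Hq: "H x q = adjoint A w" unfolding q_def using I(2) .
  have quad_q: "A x \<bullet> w = H x q \<bullet> q"
  proof -
    have "A x \<bullet> w = A q \<bullet> w" using Aq by simp
    also have "\<dots> = q \<bullet> adjoint A w" using adjoint_works[OF A(1)] by simp
    also have "\<dots> = H x q \<bullet> q" using Hq by (simp add: inner_commute)
    finally show ?thesis .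
  qed
  have orth: "H x q \<bullet> (x - q) = 0"
  proof -
    have "H x q \<bullet> (x - q) = (x - q) \<bullet> adjoint A w" using Hq by (simp add: inner_commute)
    also have "\<dots> = A (x - q) \<bullet> w" using adjoint_works[OF A(1)] by simp
    also have "A (x - q) = 0" using Aq linear_diff[OF A(1)] by simp
    finally show ?thesis by simp
  qed
  have orth': "H x (x - q) \<bullet> q = 0" using orth hess_symmetric[OF x] by metis
  have "H x x \<bullet> x = H x (q + (x - q)) \<bullet> (q + (x - q))" by simp
  also have "\<dots> = H x q \<bullet> q + H x q \<bullet> (x - q) + H x (x - q) \<bullet> q + H x (x - q) \<bullet> (x - q)"
    by (simp only: linear_add[OF hess_pos_def(1)[OF x]] inner_add_left inner_add_right add.assoc)
  finally have "H x x \<bullet> x = H x q \<bullet> q + H x (x - q) \<bullet> (x - q)" using orth orth' by simp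
  moreover have "H x x \<bullet> x = \<nu>" using hess_apply_self[OF x] grad_inner_self[OF x] by simp
  moreover have "H x (x - q) \<bullet> (x - q) \<ge> 0" by (rule hess_nonneg[OF x])
  ultimately have "H x q \<bullet> q \<le> \<nu>" by linarith
  then show ?thesis using quad_q unfolding w_def M_def by simp
qed

end

lemma barrier_derivatives_of_normal_barrier:
  assumes "regular_cone K" "normal_barrier \<nu> K F"
  obtains F1 F2 F3 where "barrier_derivatives K F \<nu> F1 F2 F3"
  using assms unfolding normal_barrier_def barrier_derivatives_def by blast

section \<open>The dual barrier objective\<close>

lemma interior_affine_preimage:
  fixes L :: "'h::real_normed_vector \<Rightarrow> 'e::euclidean_space"
  assumes L: "linear L" and C: "convex C" and y0: "c - L y0 \<in> interior C"
    and y: "y \<in> interior {y. c - L y \<in> C}"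
  shows "c - L y \<in> interior C"
proof -
  obtain e where e: "e > 0" "ball y e \<subseteq> {y. c - L y \<in> C}" using y mem_interior by blast
  define l where "l = e / (2 * (norm (y - y0) + 1))"
  have l: "l > 0" unfolding l_def using e by (simp add: add_nonneg_pos)
  have "l * norm (y - y0) < e"
  proof -
    have "l * norm (y - y0) \<le> l * (norm (y - y0) + 1)" using l by simp
    also have "\<dots> = e / 2"
      using add_nonneg_pos[OF norm_ge_zero[of "y - y0"] zero_less_one] unfolding l_def
        by (simp add: field_simps)
    finally show ?thesis using e by simp
  qed
  then have "y + l *\<^sub>R (y - y0) \<in> ball y e" using l by (simp add: dist_norm)
  then have far: "c - L (y + l *\<^sub>R (y - y0)) \<in> C" using e by auto
  text \<open>\<open>y\<close> lies strictly between \<open>y0\<close> and the feasible point \<open>y + l (y - y0)\<close>.\<close>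
  have "(c - L (y + l *\<^sub>R (y - y0))) - (l / (1 + l)) *\<^sub>R ((c - L (y + l *\<^sub>R (y - y0))) - (c - L y0))
      = c - L y"
  proof -
    have "(l / (1 + l)) *\<^sub>R ((1 + l) *\<^sub>R (L y - L y0)) = l *\<^sub>R (L y - L y0)" using l by simp
    then show ?thesis
      by (simp add: linear_add[OF L] linear_cmul[OF L] linear_diff[OF L] algebra_simps)
  qed
  moreover have "0 < l / (1 + l)" "l / (1 + l) \<le> 1" using l by auto
  ultimately show ?thesis using mem_interior_convex_shrink[OF C y0 far] by metis
qed

lemma has_derivative_dual_slack:
  fixes A :: "'e::euclidean_space \<Rightarrow> 'h::euclidean_space"
  assumes "linear A"
  shows "((\<lambda>y. c - adjoint A y) has_derivative (\<lambda>h. - adjoint A h)) (at y)"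
  using has_derivative_diff[OF has_derivative_const
      bounded_linear_imp_has_derivative[OF adjoint_linear[OF assms, unfolded linear_conv_bounded_linear]]]
  by simp

lemma quad_norm_le_of_sharpness:
  assumes G: "linear G" "symmetric_map G" "pos_def_map G" and \<gamma>: "\<gamma> > 0"
    and plus: "\<gamma> * quad_norm G (y + h - y') \<le> f - b \<bullet> (y + h)"
    and minus: "\<gamma> * quad_norm G (y - h - y') \<le> f - b \<bullet> (y - h)"
  shows "quad_norm G h \<le> (f - b \<bullet> y) / \<gamma>"
proof -
  have "2 * quad_norm G h = quad_norm G ((y + h - y') + (- 1) *\<^sub>R (y - h - y'))"
    using quad_norm_scaleR[OF G(1), of 2 h] by (simp add: algebra_simps scaleR_2)
  also have "\<dots> \<le> quad_norm G (y + h - y') + quad_norm G (y - h - y')"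
    using quad_norm_triangle[OF G, of "y + h - y'" "(- 1) *\<^sub>R (y - h - y')"]
      quad_norm_scaleR[OF G(1), of "- 1" "y - h - y'"] by simp
  finally have "\<gamma> * (2 * quad_norm G h) \<le> \<gamma> * quad_norm G (y + h - y') + \<gamma> * quad_norm G (y - h - y')"
    using \<gamma> by (simp add: distrib_left[symmetric])
  also have "\<dots> \<le> 2 * (f - b \<bullet> y)"
    using add_mono[OF plus minus] by (simp add: inner_add_right inner_diff_right)
  finally show ?thesis using \<gamma> by (simp add: field_simps)
qed

lemma G_norm_primal_eq: "G_norm_primal A B = quad_norm (Gmap A B)"
  by (intro ext) (simp add: G_norm_primal_def quad_norm_def)

lemma G_norm_dual_eq: "G_norm_dual A B = quad_norm (inv (Gmap A B))"
  by (intro ext) (simp add: G_norm_dual_def quad_norm_def inner_commute)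

lemma G_opnorm_inv_le:
  fixes A :: "'e::euclidean_space \<Rightarrow> 'h::euclidean_space"
  assumes A: "linear A" "surj A" and B: "linear B" "symmetric_map B" "pos_def_map B"
    and M: "linear M" "symmetric_map M" "pos_def_map M" and R: "R \<ge> 0"
    and loewner: "\<And>h. Gmap A B h \<bullet> h \<le> R\<^sup>2 * (M h \<bullet> h)"
  shows "G_opnorm A B (inv M) \<le> R\<^sup>2"
proof -
  note G = Gmap_pos_def[OF A B]
  obtain g where "quad_norm (inv (Gmap A B)) g = 1"
    using quad_norm_unit_exists[OF pos_def_map_inv(1,5)[OF G]] by blast
  then show ?thesis
    unfolding G_opnorm_def G_norm_primal_eq G_norm_dual_eq
    by (intro cSup_least) (auto intro: quad_norm_inv_le(2)[OF G M R loewner])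
qed

context barrier_derivatives
begin

lemma hess_F_eq:
  assumes x: "x \<in> U"
  shows "hess F x = H x"
proof (rule hess_eqI)
  show "(grad F has_derivative H x) (at x)"
  proof (rule has_derivative_transform_within_open[OF grad_deriv[OF x] open_interior x])
    fix x' assume "x' \<in> U"
    then show "F1 x' = grad F x'" using grad_eqI[OF F_deriv] by simp
  qed
qed

lemma grad_dual_objective:
  fixes A :: "'a \<Rightarrow> 'h::euclidean_space"
  assumes A: "linear A" and y: "c - adjoint A y \<in> V"
  shows "grad (\<lambda>y. dual_barrier K F (c - adjoint A y)) y = A (primal_point (c - adjoint A y))"
proof (rule grad_eqI)
  let ?x = "primal_point (c - adjoint A y)"
  have "adjoint A h \<bullet> ?x = A ?x \<bullet> h" for h by (metis adjoint_works[OF A] inner_commute)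
  then have "(\<lambda>h. - (- adjoint A h \<bullet> ?x)) = (\<lambda>h. A ?x \<bullet> h)" by simp
  then show "((\<lambda>y. dual_barrier K F (c - adjoint A y)) has_derivative (\<lambda>h. A ?x \<bullet> h)) (at y)"
    using has_derivative_compose[OF has_derivative_dual_slack[OF A] dual_barrier_has_derivative[OF y]]
    by (simp add: o_def)
qed

lemma hess_dual_objective:
  fixes A :: "'a \<Rightarrow> 'h::euclidean_space"
  assumes A: "linear A" and y: "c - adjoint A y \<in> V"
  shows "hess (\<lambda>y. dual_barrier K F (c - adjoint A y)) y = Gmap A (H (primal_point (c - adjoint A y)))"
proof -
  let ?x = "primal_point (c - adjoint A y)"
  have "open {y. c - adjoint A y \<in> V}"
    using has_derivative_continuous[OF has_derivative_dual_slack[OF A]]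
    by (intro open_vimage[of V "\<lambda>y. c - adjoint A y", unfolded vimage_def] continuous_at_imp_continuous_on)
      auto
  moreover have "((\<lambda>y. A (primal_point (c - adjoint A y))) has_derivative
      (\<lambda>h. A (inv (H ?x) (adjoint A h)))) (at y)"
    using has_derivative_compose[OF has_derivative_compose[OF has_derivative_dual_slack[OF A]
          primal_point_has_derivative[OF y]] bounded_linear_imp_has_derivative[of A]] A
    by (simp add: o_def linear_conv_bounded_linear)
  ultimately have "(grad (\<lambda>y. dual_barrier K F (c - adjoint A y)) has_derivative
      (\<lambda>h. A (inv (H ?x) (adjoint A h)))) (at y)"
    using y by (auto intro: has_derivative_transform_within_open simp: grad_dual_objective[OF A])
  then show ?thesis unfolding Gmap_def by (rule hess_eqI)
qed

lemma dual_feasible_of_ellipsoid: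
  fixes A :: "'a \<Rightarrow> 'h::euclidean_space"
  assumes A: "linear A" and y: "c - adjoint A y \<in> V"
    and h: "Gmap A (H (primal_point (c - adjoint A y))) h \<bullet> h \<le> 1"
  shows "c - adjoint A (y + h) \<in> dual_cone K"
proof -
  let ?x = "primal_point (c - adjoint A y)"
  have "inv (H ?x) (- adjoint A h) \<bullet> (- adjoint A h) \<le> 1"
    using h Gmap_inner_self[OF A] linear_neg[OF pos_def_map_inv(1)[OF hess_pos_def[OF primal_point_in_U[OF y]]]]
    by simp
  from dual_dikin_ellipsoid[OF primal_point_in_U[OF y] this] grad_primal_point[OF y]
  show ?thesis by (simp add: linear_add[OF adjoint_linear[OF A]] algebra_simps)
qed

lemma dual_objective_loewner:
  fixes A :: "'a \<Rightarrow> 'h::euclidean_space"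
  assumes A: "linear A" "surj A" and x1: "x1 \<in> U" and y: "c - adjoint A y \<in> V" and \<gamma>: "\<gamma> > 0"
    and sharp: "\<And>y'. c - adjoint A y' \<in> dual_cone K \<Longrightarrow>
      \<gamma> * quad_norm (Gmap A (H x1)) (y' - y_star) \<le> fstar - b \<bullet> y'"
  shows "Gmap A (H x1) h \<bullet> h
    \<le> ((fstar - b \<bullet> y) / \<gamma>)\<^sup>2 * (Gmap A (H (primal_point (c - adjoint A y))) h \<bullet> h)"
proof -
  let ?M = "Gmap A (H (primal_point (c - adjoint A y)))"
  note G = Gmap_pos_def[OF A hess_pos_def[OF x1]]
  note M = Gmap_pos_def[OF A hess_pos_def[OF primal_point_in_U[OF y]]]
  show ?thesis
  proof (rule quad_form_le_of_ellipsoid[OF G(1,3) M(1,3)])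
    fix h assume h: "?M h \<bullet> h \<le> 1"
    have plus: "c - adjoint A (y + h) \<in> dual_cone K" by (rule dual_feasible_of_ellipsoid[OF A(1) y h])
    have minus: "c - adjoint A (y + - h) \<in> dual_cone K"
      by (rule dual_feasible_of_ellipsoid[OF A(1) y]) (use h in \<open>simp add: linear_neg[OF M(1)]\<close>)
    show "quad_norm (Gmap A (H x1)) h \<le> (fstar - b \<bullet> y) / \<gamma>"
      by (rule quad_norm_le_of_sharpness[OF G \<gamma>]; rule sharp) (use plus minus in simp_all)
  qed
qed

lemma dual_objective_inv_hess_bounds:
  fixes A :: "'a \<Rightarrow> 'h::euclidean_space" and c :: 'a
  defines "f \<equiv> \<lambda>y. dual_barrier K F (c - adjoint A y)"
  assumes A: "linear A" "surj A" and x1: "x1 \<in> U" and y: "c - adjoint A y \<in> V" and \<gamma>: "\<gamma> > 0"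
    and sharp: "\<And>y'. c - adjoint A y' \<in> dual_cone K \<Longrightarrow>
      \<gamma> * G_norm_primal A (H x1) (y' - y_star) \<le> fstar - b \<bullet> y'"
  shows "b \<bullet> y \<le> fstar"
    and "G_opnorm A (H x1) (inv (hess f y)) \<le> ((fstar - b \<bullet> y) / \<gamma>)\<^sup>2"
    and "G_norm_primal A (H x1) (inv (hess f y) (grad f y)) \<le> (fstar - b \<bullet> y) / \<gamma> * sqrt \<nu>"
proof -
  define x where "x = primal_point (c - adjoint A y)"
  define R where "R = (fstar - b \<bullet> y) / \<gamma>"
  have x: "x \<in> U" unfolding x_def using primal_point_in_U[OF y] .
  note B = hess_pos_def[OF x1]
  note M = Gmap_pos_def[OF A hess_pos_def[OF x]]
  have "0 \<le> \<gamma> * G_norm_primal A (H x1) (y - y_star)"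
    using \<gamma> quad_norm_nonneg[OF Gmap_pos_def(3)[OF A B]] unfolding G_norm_primal_eq by simp
  also have "\<dots> \<le> fstar - b \<bullet> y" by (rule sharp) (use interior_subset y in blast)
  finally have "0 \<le> fstar - b \<bullet> y" .
  then show "b \<bullet> y \<le> fstar" by simp
  have R: "R \<ge> 0" unfolding R_def using \<open>0 \<le> fstar - b \<bullet> y\<close> \<gamma> by simp
  have loewner: "Gmap A (H x1) h \<bullet> h \<le> R\<^sup>2 * (Gmap A (H x) h \<bullet> h)" for h
    unfolding R_def x_def using sharp unfolding G_norm_primal_eq
    by (rule dual_objective_loewner[OF A x1 y \<gamma>])
  have hess_f: "hess f y = Gmap A (H x)"
    unfolding f_def x_def by (rule hess_dual_objective[OF A(1) y])
  show "G_opnorm A (H x1) (inv (hess f y)) \<le> ((fstar - b \<bullet> y) / \<gamma>)\<^sup>2"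
    unfolding hess_f R_def[symmetric] by (rule G_opnorm_inv_le[OF A B M R loewner])
  have "G_norm_primal A (H x1) (inv (hess f y) (grad f y))
      \<le> R * sqrt (A x \<bullet> inv (Gmap A (H x)) (A x))"
    unfolding G_norm_primal_eq hess_f unfolding f_def grad_dual_objective[OF A(1) y] x_def[symmetric]
    by (rule quad_norm_inv_le(1)[OF Gmap_pos_def[OF A B] M R loewner])
  also have "\<dots> \<le> R * sqrt \<nu>" using Gmap_hess_inv_le_nu[OF x A] R by (intro mult_left_mono) auto
  finally show "G_norm_primal A (H x1) (inv (hess f y) (grad f y)) \<le> (fstar - b \<bullet> y) / \<gamma> * sqrt \<nu>"
    unfolding R_def .
qed

end

theorem mainTheorem7:
  fixes K :: "'e::euclidean_space set" and F :: "'e \<Rightarrow> real" and \<nu> :: real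
    and A :: "'e \<Rightarrow> 'h::euclidean_space" and c :: 'e and b :: 'h
    and x1 :: 'e and y1 :: 'h and s_star :: 'e and y_star :: 'h and \<gamma>d :: real
  assumes K: "regular_cone K"
    and F: "normal_barrier \<nu> K F"
    and A: "linear A" "surj A"
    and primal_strict: "\<exists>x\<in>interior K. A x = b"
    and dual_strict: "\<exists>y. c - adjoint A y \<in> interior (dual_cone K)"
    and central_x1: "x1 \<in> interior K" "A x1 = b" "c - adjoint A y1 = - grad F x1"
    and opt_pair: "s_star + adjoint A y_star = c" "s_star \<in> dual_cone K"
      "b \<bullet> y_star = Sup {b \<bullet> y | y. c - adjoint A y \<in> dual_cone K}"
    and gamma: "\<gamma>d > 0"
    and assumption1: "\<forall>y. c - adjoint A y \<in> dual_cone K \<longrightarrow>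
        Sup {b \<bullet> y | y. c - adjoint A y \<in> dual_cone K} - b \<bullet> y
          \<ge> \<gamma>d * G_norm_primal A (hess F x1) (y - y_star)"
  shows "\<forall>y \<in> interior {y. c - adjoint A y \<in> dual_cone K}.
    (let f = (\<lambda>y. dual_barrier K F (c - adjoint A y));
         fstar = Sup {b \<bullet> y | y. c - adjoint A y \<in> dual_cone K};
         B = hess F x1
     in G_opnorm A B (inv (hess f y)) \<le> 4 / \<gamma>d\<^sup>2 * (fstar - b \<bullet> y)\<^sup>2 \<and>
        G_norm_primal A B (inv (hess f y) (grad f y)) \<le> 2 * sqrt \<nu> / \<gamma>d * (fstar - b \<bullet> y))"
proof -
  obtain F1 F2 F3 where "barrier_derivatives K F \<nu> F1 F2 F3"
    using barrier_derivatives_of_normal_barrier[OF K F] .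
  then interpret barrier_derivatives K F \<nu> F1 F2 F3 .
  let ?fstar = "Sup {b \<bullet> y | y. c - adjoint A y \<in> dual_cone K}"
  obtain y0 where y0: "c - adjoint A y0 \<in> V" using dual_strict by blast
  have sharp: "\<gamma>d * G_norm_primal A (H x1) (y - y_star) \<le> ?fstar - b \<bullet> y"
    if "c - adjoint A y \<in> dual_cone K" for y
    using assumption1 that unfolding hess_F_eq[OF central_x1(1)] by blast
  show ?thesis unfolding Let_def hess_F_eq[OF central_x1(1)]
  proof (intro ballI conjI)
    fix y assume "y \<in> interior {y. c - adjoint A y \<in> dual_cone K}"
    then have y: "c - adjoint A y \<in> V"
      by (rule interior_affine_preimage[OF adjoint_linear[OF A(1)] convex_dual_cone y0])
    note bounds = dual_objective_inv_hess_bounds[OF A central_x1(1) y gamma sharp]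
    have "((?fstar - b \<bullet> y) / \<gamma>d)\<^sup>2 = 1 / \<gamma>d\<^sup>2 * (?fstar - b \<bullet> y)\<^sup>2"
      by (simp add: power_divide)
    also have "\<dots> \<le> 4 / \<gamma>d\<^sup>2 * (?fstar - b \<bullet> y)\<^sup>2"
      by (intro mult_right_mono divide_right_mono) auto
    finally have "((?fstar - b \<bullet> y) / \<gamma>d)\<^sup>2 \<le> 4 / \<gamma>d\<^sup>2 * (?fstar - b \<bullet> y)\<^sup>2" .
    with bounds(2) show "G_opnorm A (H x1) (inv (hess (\<lambda>y. dual_barrier K F (c - adjoint A y)) y))
        \<le> 4 / \<gamma>d\<^sup>2 * (?fstar - b \<bullet> y)\<^sup>2" by linarith
    have "(?fstar - b \<bullet> y) / \<gamma>d * sqrt \<nu> \<le> 2 * sqrt \<nu> / \<gamma>d * (?fstar - b \<bullet> y)"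
      using bounds(1) gamma nu_pos by (simp add: field_simps mult_left_mono)
    with bounds(3) show "G_norm_primal A (H x1) (inv (hess (\<lambda>y. dual_barrier K F (c - adjoint A y)) y)
        (grad (\<lambda>y. dual_barrier K F (c - adjoint A y)) y)) \<le> 2 * sqrt \<nu> / \<gamma>d * (?fstar - b \<bullet> y)"
      by linarith
  qed
qed

end
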